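(* Let $n\in\mathbb N$ and let $\beta,\gamma$ be compositions of $n$. Then $$\sum_{\alpha}|\mathrm{CONS}(\alpha,\beta)|\,(-1)^{|S_\gamma\setminus S_\alpha|}=\begin{cases} n! & \text{if } \beta\le\gamma,\\ 0&\text{otherwise,}\end{cases}$$ where the sum ranges over all compositions $\alpha$ of $n$ such that $\alpha\le\beta$ and $S_\gamma$ is $\alpha$-unimodal.
   Context: A composition $\alpha=(\alpha_1,\dots,\alpha_\ell)$ of $n$ is a sequence of positive integers summing to $n$; $\ell(\alpha)=\ell$. Set $S_\alpha=\{\alpha_1,\alpha_1+\alpha_2,\dots,\alpha_1+\dots+\alpha_{\ell-1}\}\subseteq[n-1]$. Blocks: $B_i(\alpha)=\{\alpha_1+\dots+\alpha_{i-1}+1,\dots,\alpha_1+\dots+\alpha_i\}$. For compositions $\alpha,\beta$ of $n$, $\alpha\le\beta$ means $S_\beta\subseteq S_\alpha$ (i.e. $\beta$ is obtained by adding contiguous parts of $\alpha$). A set $S\subseteq[n-1]$ is $\alpha$-unimodal if for every $i$ the set $S\cap(B_i(\alpha)\setminus S_\alpha)$ is an initial segment (in increasing order) of $B_i(\alpha)\setminus S_\alpha$. For $\alpha\le\beta$ and $\sigma\in\mathfrak S_n$ (one-line notation), let $\sigma^{(i)}=\sigma_a\cdots\sigma_b$ where $B_i(\alpha)=[a,b]$. The permutation $\sigma$ is consistent with $\alpha\le\beta$ if (i) for each $i\in[\ell(\alpha)]$ the maximum of $\sigma^{(i)}$ is its last letter, and (ii) for each $k\in[\ell(\beta)]$,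 if $B_k(\beta)=\bigcup_{r=i}^jB_r(\alpha)$, then the maxima of $\sigma^{(i)},\dots,\sigma^{(j)}$ are increasing. $\mathrm{CONS}(\alpha,\beta)$ is the set of such permutations. *)

theory Defs
  imports "HOL-Combinatorics.Permutations"
begin

definition is_comp :: "nat \<Rightarrow> nat list \<Rightarrow> bool" where
  "is_comp n \<alpha> \<longleftrightarrow> (\<forall>a\<in>set \<alpha>. 0 < a) \<and> sum_list \<alpha> = n"

definition Sset :: "nat list \<Rightarrow> nat set" where
  "Sset \<alpha> = {sum_list (take i \<alpha>) | i. 1 \<le> i \<and> i < length \<alpha>}"

definition block :: "nat list \<Rightarrow> nat \<Rightarrow> nat set" where
  "block \<alpha> i = {sum_list (take (i - 1) \<alpha>) + 1 .. sum_list (take i \<alpha>)}"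

definition comp_le :: "nat list \<Rightarrow> nat list \<Rightarrow> bool" where
  "comp_le \<alpha> \<beta> \<longleftrightarrow> Sset \<beta> \<subseteq> Sset \<alpha>"

definition unimodal :: "nat list \<Rightarrow> nat set \<Rightarrow> bool" where
  "unimodal \<alpha> S \<longleftrightarrow>
     (\<forall>i\<in>{1..length \<alpha>}.
        \<forall>x \<in> S \<inter> (block \<alpha> i - Sset \<alpha>). \<forall>y \<in> block \<alpha> i - Sset \<alpha>. y < x \<longrightarrow> y \<in> S)"

definition CONS :: "nat \<Rightarrow> nat list \<Rightarrow> nat list \<Rightarrow> (nat \<Rightarrow> nat) set" where
  "CONS n \<alpha> \<beta> = {\<sigma>. \<sigma> permutes {1..n} \<and>
     (\<forall>i\<in>{1..length \<alpha>}. \<sigma> (sum_list (take i \<alpha>)) = Max (\<sigma> ` block \<alpha> i)) \<and>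
     (\<forall>k\<in>{1..length \<beta>}. \<forall>r\<in>{1..length \<alpha>}. \<forall>r'\<in>{1..length \<alpha>}.
        r < r' \<and> block \<alpha> r \<subseteq> block \<beta> k \<and> block \<alpha> r' \<subseteq> block \<beta> k \<longrightarrow>
        Max (\<sigma> ` block \<alpha> r) < Max (\<sigma> ` block \<alpha> r'))}"

end

theory Submission
  imports Defs "HOL-Combinatorics.Multiset_Permutations"
begin

text \<open>
  Identify a composition \<open>\<alpha>\<close> of \<open>n\<close> with its set of cuts \<open>S\<^sub>\<alpha> \<subseteq> [n-1]\<close>. For \<open>\<alpha> \<le> \<beta>\<close>, a permutation
  lies in \<open>CONS(\<alpha>,\<beta>)\<close> iff the last letter of every \<open>\<alpha>\<close>-block exceeds all earlier letters of its
  \<open>\<beta>\<close>-block, and \<open>S\<^sub>\<gamma>\<close> is \<open>\<alpha>\<close>-unimodal iff in every block the non-cuts lying in \<open>S\<^sub>\<gamma>\<close> form an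
  initial segment. Both conditions are local to the blocks of \<open>\<beta>\<close>: splitting off the last block of
  \<open>\<beta>\<close> at \<open>b = max S\<^sub>\<beta>\<close>, the sum factors as \<open>(n choose b)\<close> times the sum for the first \<open>b\<close> letters
  times the sum for a single block of length \<open>n - b\<close>. For a single block the count is
  \<open>\<Prod>([n-1] - A)\<close>, the number of permutations whose left-to-right maxima include the positions
  \<open>A \<union> {n}\<close>, and a recursion on \<open>n\<close> shows that \<open>\<Sum>\<^sub>A \<Prod>([n-1] - A) (-1)\<^bsup>|G - A|\<^esup>\<close>, over the cut sets
  \<open>A\<close> for which \<open>G\<close> is unimodal, is \<open>n!\<close> for \<open>G = {}\<close> and \<open>0\<close> otherwise. By induction on the number
  of blocks of \<open>\<beta>\<close> the whole sum is \<open>n!\<close> exactly when \<open>S\<^sub>\<gamma> \<subseteq> S\<^sub>\<beta>\<close>.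
\<close>

section \<open>Splitting permutations of a finite set\<close>

lemma sum_subsets_insert:
  assumes "x \<notin> S" "finite S"
  shows "(\<Sum>A | A \<subseteq> insert x S \<and> P A. f A) =
         (\<Sum>A | A \<subseteq> S \<and> P A. f A) + (\<Sum>A | A \<subseteq> S \<and> P (insert x A). f (insert x A))"
proof -
  have split: "{A. A \<subseteq> insert x S \<and> P A} =
      {A. A \<subseteq> S \<and> P A} \<union> insert x ` {A. A \<subseteq> S \<and> P (insert x A)}"
  proof (intro set_eqI iffI)
    fix A assume A: "A \<in> {A. A \<subseteq> insert x S \<and> P A}"
    show "A \<in> {A. A \<subseteq> S \<and> P A} \<union> insert x ` {A. A \<subseteq> S \<and> P (insert x A)}"
    proof (cases "x \<in> A")
      case True
      then have "A = insert x (A - {x})" "A - {x} \<in> {A. A \<subseteq> S \<and> P (insert x A)}"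
        using A by (auto simp: insert_absorb)
      then show ?thesis by blast
    qed (use A in auto)
  qed auto
  have "inj_on (insert x) {A. A \<subseteq> S \<and> P (insert x A)}"
    using assms(1) by (intro inj_onI) (metis Diff_insert_absorb mem_Collect_eq subset_iff)
  moreover have "{A. A \<subseteq> S \<and> P A} \<inter> insert x ` {A. A \<subseteq> S \<and> P (insert x A)} = {}"
    using assms(1) by auto
  ultimately show ?thesis
    unfolding split using assms(2) by (subst sum.union_disjoint) (auto simp: sum.reindex)
qed

lemma permutations_of_set_snoc:
  assumes "W \<noteq> {}"
  shows "{xs \<in> permutations_of_set W. P xs} =
     (\<Union>x\<in>W. (\<lambda>ys. ys @ [x]) ` {ys \<in> permutations_of_set (W - {x}). P (ys @ [x])})"
proof (rule set_eqI, rule iffI)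
  fix xs assume xs: "xs \<in> {xs \<in> permutations_of_set W. P xs}"
  hence d: "set xs = W" "distinct xs" "P xs" by (auto simp: permutations_of_set_def)
  hence ne: "xs \<noteq> []" using assms by auto
  let ?x = "last xs" and ?ys = "butlast xs"
  have eq: "xs = ?ys @ [?x]" using ne by simp
  have "?x \<in> W" using d ne by auto
  moreover have "?ys \<in> {ys \<in> permutations_of_set (W - {?x}). P (ys @ [?x])}"
  proof -
    have "distinct (?ys @ [?x])" using d eq by metis
    hence "distinct ?ys" "?x \<notin> set ?ys" by auto
    moreover have "set ?ys \<union> {?x} = W" using d eq by (metis empty_set list.simps(15) set_append)
    ultimately have "set ?ys = W - {?x}" by auto
    thus ?thesis using \<open>distinct ?ys\<close> d eq by (auto simp: permutations_of_set_def)
  qed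
  ultimately show "xs \<in> (\<Union>x\<in>W. (\<lambda>ys. ys @ [x]) ` {ys \<in> permutations_of_set (W - {x}). P (ys @ [x])})"
    using eq by blast
next
  fix xs assume "xs \<in> (\<Union>x\<in>W. (\<lambda>ys. ys @ [x]) ` {ys \<in> permutations_of_set (W - {x}). P (ys @ [x])})"
  then obtain x ys where x: "x \<in> W" "xs = ys @ [x]" "ys \<in> permutations_of_set (W - {x})" "P (ys @ [x])" by blast
  thus "xs \<in> {xs \<in> permutations_of_set W. P xs}" by (auto simp: permutations_of_set_def)
qed

lemma card_permutations_of_set_snoc:
  assumes "finite W" "W \<noteq> {}"
  shows "card {xs \<in> permutations_of_set W. P xs} =
     (\<Sum>x\<in>W. card {ys \<in> permutations_of_set (W - {x}). P (ys @ [x])})"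
  unfolding permutations_of_set_snoc[OF assms(2)]
  by (subst card_UN_disjoint) (use assms in \<open>auto intro!: sum.cong card_image inj_onI\<close>)

lemma permutations_of_set_filter_append:
  assumes "finite V" "b \<le> card V" "\<And>ys zs. length ys = b \<Longrightarrow> length zs = card V - b \<Longrightarrow> R (ys @ zs) = (P ys \<and> Q zs)"
  shows "{xs \<in> permutations_of_set V. R xs} =
    (\<Union>U\<in>{U. U \<subseteq> V \<and> card U = b}. (\<lambda>(ys, zs). ys @ zs) ` ({ys \<in> permutations_of_set U. P ys} \<times> {zs \<in> permutations_of_set (V - U). Q zs}))"
proof (rule set_eqI, rule iffI)
  fix xs assume "xs \<in> {xs \<in> permutations_of_set V. R xs}"
  hence xs: "set xs = V" "distinct xs" "R xs" by (auto simp: permutations_of_set_def)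
  have lx: "length xs = card V" using xs distinct_card by metis
  let ?U = "set (take b xs)"
  have lt: "length (take b xs) = b" using lx assms(2) by simp
  have dt: "distinct (take b xs)" "distinct (drop b xs)" using xs(2) by auto
  have cU: "card ?U = b" using dt lt distinct_card by metis
  have UV: "?U \<subseteq> V" using xs(1) set_take_subset by metis
  have disj: "set (take b xs) \<inter> set (drop b xs) = {}" using xs(2) by (metis append_take_drop_id distinct_append)
  have un: "set (take b xs) \<union> set (drop b xs) = V" using xs(1) by (metis append_take_drop_id set_append)
  have sd: "set (drop b xs) = V - ?U" using disj un by blast
  have "length (drop b xs) = card V - b" using lx by simp
  hence PQ: "P (take b xs) \<and> Q (drop b xs)" using assms(3)[OF lt, of "drop b xs"] xs(3) by simp
  have "(take b xs, drop b xs) \<in> {ys \<in> permutations_of_set ?U. P ys} \<times> {zs \<in> permutations_of_set (V - ?U). Q zs}"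
    using PQ dt sd by (auto simp: permutations_of_set_def)
  hence "xs \<in> (\<lambda>(ys, zs). ys @ zs) ` ({ys \<in> permutations_of_set ?U. P ys} \<times> {zs \<in> permutations_of_set (V - ?U). Q zs})"
    by (metis (no_types, lifting) append_take_drop_id case_prod_conv image_eqI)
  thus "xs \<in> (\<Union>U\<in>{U. U \<subseteq> V \<and> card U = b}. (\<lambda>(ys, zs). ys @ zs) ` ({ys \<in> permutations_of_set U. P ys} \<times> {zs \<in> permutations_of_set (V - U). Q zs}))"
    using cU UV by blast
next
  fix xs assume "xs \<in> (\<Union>U\<in>{U. U \<subseteq> V \<and> card U = b}. (\<lambda>(ys, zs). ys @ zs) ` ({ys \<in> permutations_of_set U. P ys} \<times> {zs \<in> permutations_of_set (V - U). Q zs}))"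
  then obtain U ys zs where U: "U \<subseteq> V" "card U = b" and xs: "xs = ys @ zs"
    and ys: "set ys = U" "distinct ys" "P ys" and zs: "set zs = V - U" "distinct zs" "Q zs"
    by (auto simp: permutations_of_set_def)
  have "length ys = b" using ys U distinct_card by metis
  moreover have "length zs = card V - b" using zs U assms(1) distinct_card by (metis card_Diff_subset finite_subset)
  ultimately have "R xs" using assms(3) xs ys zs by simp
  moreover have "set xs = V" using xs ys zs U by auto
  moreover have "distinct xs" using xs ys zs by auto
  ultimately show "xs \<in> {xs \<in> permutations_of_set V. R xs}" by (auto simp: permutations_of_set_def)
qed

lemma card_permutations_of_set_filter_append:
  assumes "finite V" "b \<le> card V" "\<And>ys zs. length ys = b \<Longrightarrow> length zs = card V - b \<Longrightarrow> R (ys @ zs) = (P ys \<and> Q zs)"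
  shows "card {xs \<in> permutations_of_set V. R xs} =
    (\<Sum>U\<in>{U. U \<subseteq> V \<and> card U = b}. card {ys \<in> permutations_of_set U. P ys} * card {zs \<in> permutations_of_set (V - U). Q zs})"
proof -
  let ?S = "\<lambda>U. {ys \<in> permutations_of_set U. P ys} \<times> {zs \<in> permutations_of_set (V - U). Q zs}"
  have fin: "finite {U. U \<subseteq> V \<and> card U = b}" using assms(1) by simp
  have "card {xs \<in> permutations_of_set V. R xs} = card (\<Union>U\<in>{U. U \<subseteq> V \<and> card U = b}. (\<lambda>(ys, zs). ys @ zs) ` ?S U)"
    using permutations_of_set_filter_append[where R=R and P=P and Q=Q, OF assms] by simp
  also have "\<dots> = (\<Sum>U\<in>{U. U \<subseteq> V \<and> card U = b}. card ((\<lambda>(ys, zs). ys @ zs) ` ?S U))"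
  proof (rule card_UN_disjoint[OF fin])
    show "\<forall>U\<in>{U. U \<subseteq> V \<and> card U = b}. finite ((\<lambda>(ys, zs). ys @ zs) ` ?S U)" by auto
    show "\<forall>U\<in>{U. U \<subseteq> V \<and> card U = b}. \<forall>U'\<in>{U. U \<subseteq> V \<and> card U = b}. U \<noteq> U' \<longrightarrow>
      (\<lambda>(ys, zs). ys @ zs) ` ?S U \<inter> (\<lambda>(ys, zs). ys @ zs) ` ?S U' = {}"
    proof (intro ballI impI)
      fix U U' assume U: "U \<in> {U. U \<subseteq> V \<and> card U = b}" and U': "U' \<in> {U. U \<subseteq> V \<and> card U = b}" and ne: "U \<noteq> U'"
      show "(\<lambda>(ys, zs). ys @ zs) ` ?S U \<inter> (\<lambda>(ys, zs). ys @ zs) ` ?S U' = {}"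
      proof (rule ccontr)
        assume "\<not> ?thesis"
        then obtain ys zs ys' zs' where e: "ys @ zs = ys' @ zs'" and ys: "ys \<in> permutations_of_set U" and ys': "ys' \<in> permutations_of_set U'"
          by auto
        have "length ys = card U" "length ys' = card U'" using ys ys' length_finite_permutations_of_set by blast+
        hence "length ys = b" "length ys' = b" using U U' by auto
        hence "ys = ys'" using e by (metis append_eq_append_conv)
        hence "U = U'" using ys ys' by (auto simp: permutations_of_set_def)
        thus False using ne by simp
      qed
    qed
  qed
  also have "\<dots> = (\<Sum>U\<in>{U. U \<subseteq> V \<and> card U = b}. card {ys \<in> permutations_of_set U. P ys} * card {zs \<in> permutations_of_set (V - U). Q zs})"
  proof (rule sum.cong[OF refl])
    fix U assume U: "U \<in> {U. U \<subseteq> V \<and> card U = b}"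
    have "inj_on (\<lambda>(ys, zs). ys @ zs) (?S U)"
    proof (rule inj_onI)
      fix p1 p2 assume p1: "p1 \<in> ?S U" and p2: "p2 \<in> ?S U" and e: "(\<lambda>(ys, zs). ys @ zs) p1 = (\<lambda>(ys, zs). ys @ zs) p2"
      obtain a1 b1 a2 b2 where pp: "p1 = (a1, b1)" "p2 = (a2, b2)" by fastforce
      have "a1 \<in> permutations_of_set U" "a2 \<in> permutations_of_set U" using p1 p2 pp by auto
      hence "length a1 = card U" "length a2 = card U" using length_finite_permutations_of_set by blast+
      hence "length a1 = b" "length a2 = b" using U by auto
      thus "p1 = p2" using e pp by simp
    qed
    hence "card ((\<lambda>(ys, zs). ys @ zs) ` ?S U) = card (?S U)" by (rule card_image)
    also have "\<dots> = card {ys \<in> permutations_of_set U. P ys} * card {zs \<in> permutations_of_set (V - U). Q zs}"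
      by (rule card_cartesian_product)
    finally show "card ((\<lambda>(ys, zs). ys @ zs) ` ?S U) = card {ys \<in> permutations_of_set U. P ys} * card {zs \<in> permutations_of_set (V - U). Q zs}" .
  qed
  finally show ?thesis .
qed

section \<open>Left-to-right maxima\<close>

text \<open>Positions are counted from 1, as in the paper: a list \<open>xs\<close> is read as the function
  \<open>j \<mapsto> xs ! (j - 1)\<close>. A set \<open>B\<close> of positions acts as a set of cuts, and
  \<open>{j..<p} \<inter> B = {}\<close> says that \<open>j\<close> and \<open>p\<close> lie in the same block.\<close>

abbreviation entry :: "nat list \<Rightarrow> nat \<Rightarrow> nat" where
  "entry xs j \<equiv> xs ! (j - 1)"

definition block_max :: "nat set \<Rightarrow> (nat \<Rightarrow> nat) \<Rightarrow> nat \<Rightarrow> bool" where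
  "block_max B f p \<longleftrightarrow> (\<forall>j. 1 \<le> j \<and> j < p \<and> {j..<p} \<inter> B = {} \<longrightarrow> f j < f p)"

abbreviation is_prefix_max :: "nat list \<Rightarrow> nat \<Rightarrow> bool" where
  "is_prefix_max xs p \<equiv> block_max {} (entry xs) p"

lemma block_max_cong:
  assumes "\<And>j. 1 \<le> j \<Longrightarrow> j \<le> p \<Longrightarrow> f j = g j"
  shows "block_max B f p \<longleftrightarrow> block_max B g p"
  unfolding block_max_def using assms by (metis less_imp_le order.trans order_refl)

lemma block_max_insert_above: "p \<le> b \<Longrightarrow> block_max (insert b B) f p \<longleftrightarrow> block_max B f p"
  unfolding block_max_def by auto

lemma block_max_append_left:
  assumes "p \<le> length ys"
  shows "block_max B (entry (ys @ zs)) p \<longleftrightarrow> block_max B (entry ys) p"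
  using assms by (intro block_max_cong) (simp add: nth_append_left)

lemma block_max_append_right:
  assumes "1 \<le> q" "length ys = b" "b \<in> B" "B \<subseteq> {1..b}"
  shows "block_max B (entry (ys @ zs)) (b + q) \<longleftrightarrow> is_prefix_max zs q"
proof
  assume c: "block_max B (entry (ys @ zs)) (b + q)"
  show "is_prefix_max zs q" unfolding block_max_def
  proof (intro allI impI)
    fix i assume i: "1 \<le> i \<and> i < q \<and> {i..<q} \<inter> {} = {}"
    have "{b + i..<b + q} \<inter> B = {}" using assms(4) i by auto
    then have "entry (ys @ zs) (b + i) < entry (ys @ zs) (b + q)" using c i unfolding block_max_def by auto
    moreover have "b + i - 1 = length ys + (i - 1)" "b + q - 1 = length ys + (q - 1)" using i assms by arith+
    ultimately show "zs ! (i - 1) < zs ! (q - 1)" by (simp only: nth_append_length_plus)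
  qed
next
  assume c: "is_prefix_max zs q"
  show "block_max B (entry (ys @ zs)) (b + q)" unfolding block_max_def
  proof (intro allI impI)
    fix j assume j: "1 \<le> j \<and> j < b + q \<and> {j..<b + q} \<inter> B = {}"
    have "b < j"
    proof (rule ccontr)
      assume "\<not> b < j"
      then have "b \<in> {j..<b + q}" using assms(1) by simp
      then show False using j assms(3) by blast
    qed
    define i where "i = j - b"
    have i: "j = b + i" "1 \<le> i" "i < q" using \<open>b < j\<close> j unfolding i_def by arith+
    then have "zs ! (i - 1) < zs ! (q - 1)" using c unfolding block_max_def by auto
    moreover have "b + i - 1 = length ys + (i - 1)" "b + q - 1 = length ys + (q - 1)" using i assms by arith+
    ultimately show "entry (ys @ zs) j < entry (ys @ zs) (b + q)" unfolding i(1) by (simp only: nth_append_length_plus)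
  qed
qed

lemma is_prefix_max_last: "is_prefix_max (ys @ [x]) (Suc (length ys)) \<longleftrightarrow> (\<forall>y\<in>set ys. y < x)"
proof
  assume last: "is_prefix_max (ys @ [x]) (Suc (length ys))"
  show "\<forall>y\<in>set ys. y < x"
  proof
    fix y assume "y \<in> set ys"
    then obtain i where i: "i < length ys" "ys ! i = y" by (auto simp: in_set_conv_nth)
    have "entry (ys @ [x]) (Suc i) < entry (ys @ [x]) (Suc (length ys))"
      using last i unfolding block_max_def by auto
    then show "y < x" using i by (simp add: nth_append)
  qed
next
  assume smaller: "\<forall>y\<in>set ys. y < x"
  show "is_prefix_max (ys @ [x]) (Suc (length ys))" unfolding block_max_def
  proof (intro allI impI)
    fix j assume "1 \<le> j \<and> j < Suc (length ys) \<and> {j..<Suc (length ys)} \<inter> {} = {}"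
    then have "j - 1 < length ys" by arith
    then have "entry (ys @ [x]) j = ys ! (j - 1)" "ys ! (j - 1) \<in> set ys" by (simp_all add: nth_append_left)
    then show "entry (ys @ [x]) j < entry (ys @ [x]) (Suc (length ys))" using smaller by simp
  qed
qed

lemma snoc_prefix_max_iff:
  assumes "ys \<in> permutations_of_set (W - {x})" "x \<in> W" "finite W" "T \<subseteq> {1..card W}"
  shows "(\<forall>p\<in>T. is_prefix_max (ys @ [x]) p) \<longleftrightarrow>
    (card W \<in> T \<longrightarrow> x = Max W) \<and> (\<forall>p\<in>T - {card W}. is_prefix_max ys p)"
proof -
  have ys: "set ys = W - {x}" "length ys = card (W - {x})"
    using assms(1) by (auto simp: permutations_of_setD length_finite_permutations_of_set)
  then have len: "Suc (length ys) = card W" using assms(2,3) card_Suc_Diff1 by metis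
  have last: "is_prefix_max (ys @ [x]) (card W) \<longleftrightarrow> x = Max W"
  proof
    assume "is_prefix_max (ys @ [x]) (card W)"
    then have "\<forall>y\<in>W - {x}. y < x" using is_prefix_max_last[of ys x] len ys(1) by simp
    then show "x = Max W" using assms(2,3) by (intro Max_eqI[symmetric]) (auto simp: le_less)
  next
    assume "x = Max W"
    then have "\<forall>y\<in>W - {x}. y < x" using assms(3) by (simp add: order.not_eq_order_implies_strict)
    then show "is_prefix_max (ys @ [x]) (card W)" using is_prefix_max_last[of ys x] len ys(1) by simp
  qed
  have "is_prefix_max (ys @ [x]) p \<longleftrightarrow> is_prefix_max ys p" if "p \<in> T - {card W}" for p
    using that assms(4) len by (intro block_max_append_left) auto
  then show ?thesis using last by blast
qed

lemma card_prefix_max_positions: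
  assumes "finite W" "T \<subseteq> {1..card W}"
  shows "card {xs \<in> permutations_of_set W. \<forall>p\<in>T. is_prefix_max xs p} = \<Prod>({1..card W} - T)"
  using assms
proof (induction "card W" arbitrary: W T)
  case 0
  then show ?case by simp
next
  case (Suc k)
  let ?c = "\<lambda>x. card {ys \<in> permutations_of_set (W - {x}). \<forall>p\<in>T - {Suc k}. is_prefix_max ys p}"
  have W: "W \<noteq> {}" using Suc.hyps(2) by auto
  have IH: "?c x = \<Prod>({1..k} - (T - {Suc k}))" if "x \<in> W" for x
  proof -
    have "card (W - {x}) = k" using Suc.hyps(2) that by simp
    moreover have "T - {Suc k} \<subseteq> {1..k}" using Suc.hyps(2) Suc.prems(2) by (auto simp: le_Suc_eq)
    ultimately show ?thesis using Suc.hyps(1) Suc.prems(1) by simp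
  qed
  have summand: "card {ys \<in> permutations_of_set (W - {x}). \<forall>p\<in>T. is_prefix_max (ys @ [x]) p} =
      (if Suc k \<in> T \<longrightarrow> x = Max W then ?c x else 0)" if "x \<in> W" for x
  proof -
    have "{ys \<in> permutations_of_set (W - {x}). \<forall>p\<in>T. is_prefix_max (ys @ [x]) p} =
        {ys \<in> permutations_of_set (W - {x}). (Suc k \<in> T \<longrightarrow> x = Max W) \<and> (\<forall>p\<in>T - {Suc k}. is_prefix_max ys p)}"
      using snoc_prefix_max_iff[OF _ that Suc.prems] Suc.hyps(2) by auto
    then show ?thesis by simp
  qed
  have "card {xs \<in> permutations_of_set W. \<forall>p\<in>T. is_prefix_max xs p} =
      (\<Sum>x\<in>W. if Suc k \<in> T \<longrightarrow> x = Max W then ?c x else 0)"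
    using card_permutations_of_set_snoc[OF Suc.prems(1) W] summand by simp
  also have "\<dots> = \<Prod>({1..Suc k} - T)"
  proof (cases "Suc k \<in> T")
    case True
    then have "{1..Suc k} - T = {1..k} - (T - {Suc k})" by (auto simp: le_Suc_eq)
    moreover have "Max W \<in> W" using Suc.prems(1) W by simp
    ultimately show ?thesis using True IH Suc.prems(1) by (simp add: sum.delta')
  next
    case False
    then have "{1..Suc k} - T = insert (Suc k) ({1..k} - T)" by auto
    moreover have "T - {Suc k} = T" using False by simp
    ultimately show ?thesis using False IH Suc.hyps(2) by simp
  qed
  finally show ?case using Suc.hyps(2) by simp
qed

lemma card_prefix_max_cuts:
  assumes "finite V" "card V = n" "1 \<le> n" "A \<subseteq> {1..<n}"
  shows "card {xs \<in> permutations_of_set V. \<forall>p\<in>insert n A. is_prefix_max xs p} = \<Prod>({1..<n} - A)"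
proof -
  have "insert n A \<subseteq> {1..n}" "{1..n} - insert n A = {1..<n} - A" using assms(3,4) by auto
  then show ?thesis using card_prefix_max_positions[OF assms(1), of "insert n A"] assms(2) by simp
qed

section \<open>The signed sum for a single block\<close>

definition unimodal_cuts :: "nat set \<Rightarrow> nat set \<Rightarrow> bool" where
  "unimodal_cuts A G \<longleftrightarrow> (\<forall>x\<in>G - A. \<forall>y. 1 \<le> y \<and> y < x \<and> {y..<x} \<inter> A = {} \<longrightarrow> y \<in> G)"

definition last_block_in :: "nat \<Rightarrow> nat set \<Rightarrow> nat set \<Rightarrow> bool" where
  "last_block_in n A G \<longleftrightarrow> (\<forall>y. 1 \<le> y \<and> y < n \<and> {y..<n} \<inter> A = {} \<longrightarrow> y \<in> G)"

lemma unimodal_cuts_insert_top: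
  assumes "A \<subseteq> {1..<n}" "G \<subseteq> {1..n}"
  shows "unimodal_cuts (insert n A) G \<longleftrightarrow> unimodal_cuts A (G - {n})"
  unfolding unimodal_cuts_def
proof (intro iffI ballI allI impI)
  fix x y assume u: "\<forall>x\<in>G - insert n A. \<forall>y. 1 \<le> y \<and> y < x \<and> {y..<x} \<inter> insert n A = {} \<longrightarrow> y \<in> G"
    and x: "x \<in> G - {n} - A" and y: "1 \<le> y \<and> y < x \<and> {y..<x} \<inter> A = {}"
  have "x < n" using x assms(2) by fastforce
  then have "{y..<x} \<inter> insert n A = {}" using y by simp
  then have "y \<in> G" using u x y by blast
  then show "y \<in> G - {n}" using y \<open>x < n\<close> by simp
next
  fix x y assume u: "\<forall>x\<in>G - {n} - A. \<forall>y. 1 \<le> y \<and> y < x \<and> {y..<x} \<inter> A = {} \<longrightarrow> y \<in> G - {n}"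
    and x: "x \<in> G - insert n A" and y: "1 \<le> y \<and> y < x \<and> {y..<x} \<inter> insert n A = {}"
  have "{y..<x} \<inter> A = {}" using y by blast
  then show "y \<in> G" using u x y by blast
qed

lemma unimodal_cuts_top_not_cut:
  assumes "A \<subseteq> {1..<n}" "G \<subseteq> {1..n}"
  shows "unimodal_cuts A G \<longleftrightarrow> unimodal_cuts A (G - {n}) \<and> (n \<in> G \<longrightarrow> last_block_in n A (G - {n}))"
  unfolding unimodal_cuts_def last_block_in_def
proof (intro iffI conjI ballI allI impI)
  fix x y assume u: "\<forall>x\<in>G - A. \<forall>y. 1 \<le> y \<and> y < x \<and> {y..<x} \<inter> A = {} \<longrightarrow> y \<in> G"
    and x: "x \<in> G - {n} - A" and y: "1 \<le> y \<and> y < x \<and> {y..<x} \<inter> A = {}"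
  have "x < n" using x assms(2) by fastforce
  moreover have "y \<in> G" using u x y by blast
  ultimately show "y \<in> G - {n}" using y by simp
next
  fix y assume u: "\<forall>x\<in>G - A. \<forall>y. 1 \<le> y \<and> y < x \<and> {y..<x} \<inter> A = {} \<longrightarrow> y \<in> G"
    and "n \<in> G" and y: "1 \<le> y \<and> y < n \<and> {y..<n} \<inter> A = {}"
  moreover have "n \<notin> A" using assms(1) by auto
  ultimately have "y \<in> G" by blast
  then show "y \<in> G - {n}" using y by simp
next
  fix x y assume u: "(\<forall>x\<in>G - {n} - A. \<forall>y. 1 \<le> y \<and> y < x \<and> {y..<x} \<inter> A = {} \<longrightarrow> y \<in> G - {n}) \<and>
      (n \<in> G \<longrightarrow> (\<forall>y. 1 \<le> y \<and> y < n \<and> {y..<n} \<inter> A = {} \<longrightarrow> y \<in> G - {n}))"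
    and x: "x \<in> G - A" and y: "1 \<le> y \<and> y < x \<and> {y..<x} \<inter> A = {}"
  show "y \<in> G"
  proof (cases "x = n")
    case True then show ?thesis using u x y by blast
  next
    case False then show ?thesis using u x y by blast
  qed
qed

lemma last_block_in_insert: "last_block_in (Suc n) (insert n A) G"
  unfolding last_block_in_def by auto

lemma last_block_in_Suc:
  assumes "A \<subseteq> {1..<n}" "1 \<le> n"
  shows "last_block_in (Suc n) A G \<longleftrightarrow> n \<in> G \<and> last_block_in n A (G - {n})"
proof -
  have no_cut: "{y..<Suc n} \<inter> A = {} \<longleftrightarrow> {y..<n} \<inter> A = {}" for y
    using assms(1) by (auto simp: atLeastLessThan_iff disjoint_iff less_Suc_eq)
  show ?thesis
  proof
    assume last: "last_block_in (Suc n) A G"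
    then have "n \<in> G" using assms(2) no_cut[of n] unfolding last_block_in_def by simp
    moreover have "last_block_in n A (G - {n})"
      using last no_cut unfolding last_block_in_def by (metis Diff_iff less_Suc_eq less_irrefl singletonD)
    ultimately show "n \<in> G \<and> last_block_in n A (G - {n})" ..
  next
    assume "n \<in> G \<and> last_block_in n A (G - {n})"
    then show "last_block_in (Suc n) A G"
      using no_cut unfolding last_block_in_def by (metis DiffD1 less_SucE)
  qed
qed

text \<open>The weight \<open>\<Prod>({1..<n} - A)\<close> counts the permutations of \<open>n\<close> letters whose left-to-right
  maxima include the positions \<open>insert n A\<close> (lemma \<open>card_prefix_max_cuts\<close>).\<close>

definition signed_weight :: "nat \<Rightarrow> nat set \<Rightarrow> nat set \<Rightarrow> int" where
  "signed_weight n G A = int (\<Prod>({1..<n} - A)) * (-1) ^ card (G - A)"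

definition signed_sum :: "nat \<Rightarrow> nat set \<Rightarrow> int" where
  "signed_sum n G = (\<Sum>A | A \<subseteq> {1..<n} \<and> unimodal_cuts A G. signed_weight n G A)"

definition signed_sum_last :: "nat \<Rightarrow> nat set \<Rightarrow> int" where
  "signed_sum_last n G =
     (\<Sum>A | A \<subseteq> {1..<n} \<and> unimodal_cuts A G \<and> last_block_in n A G. signed_weight n G A)"

lemma signed_weight_insert_top:
  assumes "A \<subseteq> {1..<n}"
  shows "signed_weight (Suc n) G (insert n A) = signed_weight n (G - {n}) A"
proof -
  have "{1..<Suc n} - insert n A = {1..<n} - A" using assms by auto
  moreover have "G - insert n A = G - {n} - A" by auto
  ultimately show ?thesis unfolding signed_weight_def by simp
qed

lemma signed_weight_top_not_cut:
  assumes "A \<subseteq> {1..<n}" "1 \<le> n" "finite G"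
  shows "signed_weight (Suc n) G A = (if n \<in> G then - int n else int n) * signed_weight n (G - {n}) A"
proof -
  have "{1..<Suc n} - A = insert n ({1..<n} - A)" using assms by auto
  then have prod: "int (\<Prod>({1..<Suc n} - A)) = int n * int (\<Prod>({1..<n} - A))" by simp
  show ?thesis
  proof (cases "n \<in> G")
    case True
    then have "G - A = insert n (G - {n} - A)" using assms(1) by auto
    then have "card (G - A) = Suc (card (G - {n} - A))" using assms(3) by simp
    then show ?thesis using True prod unfolding signed_weight_def by simp
  next
    case False
    then have "G - {n} = G" by simp
    then show ?thesis using False prod unfolding signed_weight_def by simp
  qed
qed

lemma signed_sum_Suc:
  assumes "1 \<le> n" "G \<subseteq> {1..n}"
  shows "signed_sum (Suc n) G = signed_sum n (G - {n}) +
    (if n \<in> G then - int n * signed_sum_last n (G - {n}) else int n * signed_sum n (G - {n}))"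
proof -
  have fin: "finite G" using assms(2) finite_subset by blast
  have "{1..<Suc n} = insert n {1..<n}" using assms(1) by auto
  then have "signed_sum (Suc n) G =
      (\<Sum>A | A \<subseteq> {1..<n} \<and> unimodal_cuts A G. signed_weight (Suc n) G A) +
      (\<Sum>A | A \<subseteq> {1..<n} \<and> unimodal_cuts (insert n A) G. signed_weight (Suc n) G (insert n A))"
    unfolding signed_sum_def by (simp add: sum_subsets_insert)
  also have "(\<Sum>A | A \<subseteq> {1..<n} \<and> unimodal_cuts (insert n A) G. signed_weight (Suc n) G (insert n A))
      = signed_sum n (G - {n})"
    unfolding signed_sum_def
    by (rule sum.cong) (use assms in \<open>auto simp: unimodal_cuts_insert_top signed_weight_insert_top\<close>)
  also have "(\<Sum>A | A \<subseteq> {1..<n} \<and> unimodal_cuts A G. signed_weight (Suc n) G A)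
      = (if n \<in> G then - int n else int n) *
        (\<Sum>A | A \<subseteq> {1..<n} \<and> unimodal_cuts A G. signed_weight n (G - {n}) A)"
    using assms(1) fin by (simp add: sum_distrib_left signed_weight_top_not_cut)
  also have "{A. A \<subseteq> {1..<n} \<and> unimodal_cuts A G} =
      {A. A \<subseteq> {1..<n} \<and> unimodal_cuts A (G - {n}) \<and> (n \<in> G \<longrightarrow> last_block_in n A (G - {n}))}"
    using unimodal_cuts_top_not_cut[OF _ assms(2)] by blast
  finally show ?thesis unfolding signed_sum_def signed_sum_last_def by simp
qed

lemma signed_sum_last_Suc:
  assumes "1 \<le> n" "G \<subseteq> {1..n}"
  shows "signed_sum_last (Suc n) G = signed_sum n (G - {n}) +
    (if n \<in> G then - int n * signed_sum_last n (G - {n}) else 0)"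
proof -
  have fin: "finite G" using assms(2) finite_subset by blast
  have "{1..<Suc n} = insert n {1..<n}" using assms(1) by auto
  then have "signed_sum_last (Suc n) G =
      (\<Sum>A | A \<subseteq> {1..<n} \<and> unimodal_cuts A G \<and> last_block_in (Suc n) A G. signed_weight (Suc n) G A) +
      (\<Sum>A | A \<subseteq> {1..<n} \<and> unimodal_cuts (insert n A) G \<and> last_block_in (Suc n) (insert n A) G.
         signed_weight (Suc n) G (insert n A))"
    unfolding signed_sum_last_def by (simp add: sum_subsets_insert)
  also have "(\<Sum>A | A \<subseteq> {1..<n} \<and> unimodal_cuts (insert n A) G \<and> last_block_in (Suc n) (insert n A) G.
         signed_weight (Suc n) G (insert n A)) = signed_sum n (G - {n})"
    unfolding signed_sum_def
    by (rule sum.cong)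
      (use assms in \<open>auto simp: unimodal_cuts_insert_top signed_weight_insert_top last_block_in_insert\<close>)
  also have "(\<Sum>A | A \<subseteq> {1..<n} \<and> unimodal_cuts A G \<and> last_block_in (Suc n) A G. signed_weight (Suc n) G A)
      = (if n \<in> G then - int n else int n) *
        (\<Sum>A | A \<subseteq> {1..<n} \<and> unimodal_cuts A G \<and> last_block_in (Suc n) A G. signed_weight n (G - {n}) A)"
    using assms(1) fin by (simp add: sum_distrib_left signed_weight_top_not_cut)
  also have "{A. A \<subseteq> {1..<n} \<and> unimodal_cuts A G \<and> last_block_in (Suc n) A G} =
      (if n \<in> G then {A. A \<subseteq> {1..<n} \<and> unimodal_cuts A (G - {n}) \<and> last_block_in n A (G - {n})} else {})"
    using unimodal_cuts_top_not_cut[OF _ assms(2)] last_block_in_Suc[OF _ assms(1)] by auto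
  finally show ?thesis unfolding signed_sum_def signed_sum_last_def by simp
qed

lemma signed_sum_eq:
  assumes "1 \<le> n" "G \<subseteq> {1..<n}"
  shows "signed_sum n G = (if G = {} then fact n else 0) \<and>
         signed_sum_last n G = (if G = {} then fact (n - 1) else 0)"
  using assms
proof (induction n arbitrary: G rule: dec_induct)
  case base
  then have "G = {}" by auto
  moreover have "{A. A \<subseteq> {1..<1::nat} \<and> Q A} = (if Q {} then {{}} else {})" for Q by auto
  moreover have "unimodal_cuts {} {}" "last_block_in 1 {} {}"
    unfolding unimodal_cuts_def last_block_in_def by auto
  ultimately show ?case unfolding signed_sum_def signed_sum_last_def signed_weight_def by simp
next
  case (step n)
  have G: "G \<subseteq> {1..n}" "G - {n} \<subseteq> {1..<n}" using step.prems by auto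
  note IH = step.IH[OF G(2)]
  note rec = signed_sum_Suc[OF step.hyps(1) G(1)] signed_sum_last_Suc[OF step.hyps(1) G(1)]
  consider "G = {}" | "G = {n}" | "G - {n} \<noteq> {}" by blast
  then show ?case
  proof cases
    case 1
    then have "signed_sum (Suc n) G = fact n + int n * fact n" "signed_sum_last (Suc n) G = fact n"
      using rec IH by simp_all
    then show ?thesis using 1 by (simp add: algebra_simps)
  next
    case 2
    have "fact n = int n * fact (n - 1)"
      using step.hyps(1) by (cases n) simp_all
    then show ?thesis using 2 rec IH by simp
  next
    case 3
    then have "signed_sum n (G - {n}) = 0" "signed_sum_last n (G - {n}) = 0" using IH by simp_all
    then show ?thesis using 3 rec by auto
  qed
qed

section \<open>Factorisation over the last block\<close>

text \<open>With \<open>A = S\<^sub>\<alpha>\<close> and \<open>B = S\<^sub>\<beta>\<close>, \<open>consistent n A B\<close> characterises \<open>CONS(\<alpha>,\<beta>)\<close>: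
  the letter ending each \<open>\<alpha>\<close>-block exceeds all earlier letters of its \<open>\<beta>\<close>-block.\<close>

definition consistent :: "nat \<Rightarrow> nat set \<Rightarrow> nat set \<Rightarrow> (nat \<Rightarrow> nat) \<Rightarrow> bool" where
  "consistent n A B f \<longleftrightarrow> (\<forall>p\<in>insert n A. block_max B f p)"

definition glue :: "nat \<Rightarrow> nat set \<Rightarrow> nat set \<Rightarrow> nat set" where
  "glue b A1 A2 = A1 \<union> insert b ((+) b ` A2)"

lemma consistent_append:
  assumes "A1 \<subseteq> {1..<b}" "B1 \<subseteq> {1..<b}" "1 \<le> b" "length ys = b"
    and "A2 \<subseteq> {1..<m}" "1 \<le> m"
  shows "consistent (b + m) (glue b A1 A2) (insert b B1) (entry (ys @ zs)) \<longleftrightarrow>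
    consistent b A1 B1 (entry ys) \<and> (\<forall>q\<in>insert m A2. is_prefix_max zs q)"
proof -
  have positions: "insert (b + m) (glue b A1 A2) = insert b A1 \<union> (+) b ` insert m A2"
    unfolding glue_def by (simp add: insert_commute)
  have "block_max (insert b B1) (entry (ys @ zs)) p \<longleftrightarrow> block_max B1 (entry ys) p"
    if "p \<in> insert b A1" for p
  proof -
    have "p \<le> length ys" using that assms(1,4) by auto
    then show ?thesis using block_max_append_left block_max_insert_above assms(4) by metis
  qed
  moreover have "block_max (insert b B1) (entry (ys @ zs)) (b + q) \<longleftrightarrow> is_prefix_max zs q"
    if "q \<in> insert m A2" for q
    using that assms by (intro block_max_append_right) auto
  ultimately show ?thesis unfolding consistent_def positions by auto
qed

definition lower :: "nat \<Rightarrow> nat set \<Rightarrow> nat set" where "lower b A = {a \<in> A. a < b}"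
definition upper :: "nat \<Rightarrow> nat set \<Rightarrow> nat set" where "upper b A = {q. 1 \<le> q \<and> b + q \<in> A}"

lemma mem_shift: "x = b + (q::nat) \<Longrightarrow> (x \<in> (+) b ` S) = (q \<in> S)"
proof
  assume "x = b + q" "x \<in> (+) b ` S"
  then obtain r where "r \<in> S" "b + q = b + r" by auto
  thus "q \<in> S" by simp
qed auto

lemma lower_glue: "A1 \<subseteq> {1..<b} \<Longrightarrow> lower b (glue b A1 A2) = A1"
  unfolding lower_def glue_def by auto

lemma upper_glue: "A2 \<subseteq> {1..<m} \<Longrightarrow> A1 \<subseteq> {1..<b} \<Longrightarrow> upper b (glue b A1 A2) = A2"
  unfolding upper_def glue_def by auto

lemma glue_lower_upper: "b \<in> A \<Longrightarrow> 1 \<le> b \<Longrightarrow> A \<subseteq> {1..<b+m} \<Longrightarrow> glue b (lower b A) (upper b A) = A"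
proof -
  assume a: "b \<in> A" "1 \<le> b" "A \<subseteq> {1..<b+m}"
  show ?thesis unfolding glue_def lower_def upper_def
  proof (rule set_eqI)
    fix x
    show "x \<in> {a \<in> A. a < b} \<union> insert b ((+) b ` {q. 1 \<le> q \<and> b + q \<in> A}) \<longleftrightarrow> x \<in> A"
    proof (cases "b < x")
      case True
      hence xq: "x = b + (x - b)" "1 \<le> x - b" by auto
      note ms = mem_shift[OF xq(1)]
      show ?thesis unfolding Un_iff insert_iff ms using True xq by auto
    next
      case False
      then show ?thesis using a by auto
    qed
  qed
qed

lemma glue_gap_lower:
  assumes "x \<le> b" "A1 \<subseteq> {1..<b}"
  shows "{y..<x} \<inter> glue b A1 A2 = {} \<longleftrightarrow> {y..<x} \<inter> A1 = {}"
proof -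
  have "{y..<x} \<inter> glue b A1 A2 = {y..<x} \<inter> A1" using assms unfolding glue_def by auto
  then show ?thesis by simp
qed

lemma glue_gap_upper:
  assumes "1 \<le> r" "A1 \<subseteq> {1..<b}"
  shows "{b + r..<b + q} \<inter> glue b A1 A2 = {} \<longleftrightarrow> {r..<q} \<inter> A2 = {}"
proof -
  have "{b + r..<b + q} \<inter> glue b A1 A2 = (+) b ` ({r..<q} \<inter> A2)"
    using assms unfolding glue_def by (auto simp: image_iff)
  then show ?thesis by simp
qed

lemma glue_prefix_below:
  assumes "x < b" "A1 \<subseteq> {1..<b}"
  shows "(\<forall>y. 1 \<le> y \<and> y < x \<and> {y..<x} \<inter> glue b A1 A2 = {} \<longrightarrow> y \<in> G) \<longleftrightarrow>
    (\<forall>y. 1 \<le> y \<and> y < x \<and> {y..<x} \<inter> A1 = {} \<longrightarrow> y \<in> lower b G)"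
  using assms glue_gap_lower[OF _ assms(2), of x] unfolding lower_def by auto

lemma glue_prefix_above:
  assumes q: "1 \<le> q" and A1: "A1 \<subseteq> {1..<b}"
  shows "(\<forall>y. 1 \<le> y \<and> y < b + q \<and> {y..<b + q} \<inter> glue b A1 A2 = {} \<longrightarrow> y \<in> G) \<longleftrightarrow>
    (\<forall>r. 1 \<le> r \<and> r < q \<and> {r..<q} \<inter> A2 = {} \<longrightarrow> r \<in> upper b G)"
proof
  assume "\<forall>y. 1 \<le> y \<and> y < b + q \<and> {y..<b + q} \<inter> glue b A1 A2 = {} \<longrightarrow> y \<in> G"
  then show "\<forall>r. 1 \<le> r \<and> r < q \<and> {r..<q} \<inter> A2 = {} \<longrightarrow> r \<in> upper b G"
    using glue_gap_upper[OF _ A1] unfolding upper_def by auto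
next
  assume above: "\<forall>r. 1 \<le> r \<and> r < q \<and> {r..<q} \<inter> A2 = {} \<longrightarrow> r \<in> upper b G"
  show "\<forall>y. 1 \<le> y \<and> y < b + q \<and> {y..<b + q} \<inter> glue b A1 A2 = {} \<longrightarrow> y \<in> G"
  proof (intro allI impI)
    fix y assume y: "1 \<le> y \<and> y < b + q \<and> {y..<b + q} \<inter> glue b A1 A2 = {}"
    have "b \<in> glue b A1 A2" unfolding glue_def by simp
    then have "b < y" using y q by (metis IntI atLeastLessThan_iff empty_iff less_add_same_cancel1
        linorder_not_less zero_less_one less_le_trans)
    then obtain r where r: "y = b + r" "1 \<le> r" by (metis add_diff_inverse_nat less_imp_add_positive
        less_one linorder_not_less not_less_zero)
    then show "y \<in> G" using above y glue_gap_upper[OF r(2) A1] unfolding upper_def by auto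
  qed
qed

lemma unimodal_cuts_glue:
  assumes A1: "A1 \<subseteq> {1..<b}" and A2: "A2 \<subseteq> {1..<m}" and b: "1 \<le> b"
  shows "unimodal_cuts (glue b A1 A2) G \<longleftrightarrow> unimodal_cuts A1 (lower b G) \<and> unimodal_cuts A2 (upper b G)"
proof -
  let ?A = "glue b A1 A2"
  let ?P = "\<lambda>x. \<forall>y. 1 \<le> y \<and> y < x \<and> {y..<x} \<inter> ?A = {} \<longrightarrow> y \<in> G"
  have b_cut: "b \<in> ?A" unfolding glue_def by simp
  have lower_part: "{x \<in> G - ?A. x < b} = lower b G - A1"
    using A1 unfolding lower_def glue_def by auto
  have "b + q \<in> ?A \<longleftrightarrow> q \<in> A2" if "1 \<le> q" for q
  proof -
    have "b + q \<notin> A1" using A1 by auto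
    then show ?thesis using that unfolding glue_def by auto
  qed
  then have upper_part: "{q. 1 \<le> q \<and> b + q \<in> G - ?A} = upper b G - A2"
    unfolding upper_def by auto
  have split: "x < b \<or> (\<exists>q. x = b + q \<and> 1 \<le> q)" if "x \<in> G - ?A" for x
  proof -
    have "x \<noteq> b" using that b_cut by auto
    then show ?thesis by (cases "x < b") (auto intro!: exI[of _ "x - b"])
  qed
  have "unimodal_cuts ?A G \<longleftrightarrow>
      (\<forall>x\<in>{x \<in> G - ?A. x < b}. ?P x) \<and> (\<forall>q\<in>{q. 1 \<le> q \<and> b + q \<in> G - ?A}. ?P (b + q))"
    unfolding unimodal_cuts_def
  proof (intro iffI conjI ballI)
    fix x assume H: "(\<forall>x\<in>{x \<in> G - ?A. x < b}. ?P x) \<and> (\<forall>q\<in>{q. 1 \<le> q \<and> b + q \<in> G - ?A}. ?P (b + q))"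
      and x: "x \<in> G - ?A"
    from split[OF x] show "?P x"
    proof
      assume "\<exists>q. x = b + q \<and> 1 \<le> q"
      then obtain q where "x = b + q" "1 \<le> q" by blast
      then show "?P x" using H x by blast
    qed (use H x in blast)
  qed blast+
  also have "(\<forall>x\<in>{x \<in> G - ?A. x < b}. ?P x) \<longleftrightarrow> unimodal_cuts A1 (lower b G)"
    unfolding lower_part unimodal_cuts_def
    by (rule ball_cong[OF refl], rule glue_prefix_below[OF _ A1]) (simp add: lower_def)
  also have "(\<forall>q\<in>{q. 1 \<le> q \<and> b + q \<in> G - ?A}. ?P (b + q)) \<longleftrightarrow> unimodal_cuts A2 (upper b G)"
    unfolding upper_part unimodal_cuts_def
    by (rule ball_cong[OF refl], rule glue_prefix_above[OF _ A1]) (simp add: upper_def)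
  finally show ?thesis .
qed

lemma card_diff_glue:
  assumes A1: "A1 \<subseteq> {1..<b}" and A2: "A2 \<subseteq> {1..<m}" and b: "1 \<le> b" and G: "G \<subseteq> {1..<b+m}"
  shows "card (G - glue b A1 A2) = card (lower b G - A1) + card (upper b G - A2)"
proof -
  have e: "G - glue b A1 A2 = (lower b G - A1) \<union> (+) b ` (upper b G - A2)"
  proof (rule set_eqI)
    fix x show "x \<in> G - glue b A1 A2 \<longleftrightarrow> x \<in> (lower b G - A1) \<union> (+) b ` (upper b G - A2)"
    proof (cases "b < x")
      case True
      hence xq: "x = b + (x - b)" "1 \<le> x - b" by auto
      note ms = mem_shift[OF xq(1)]
      show ?thesis unfolding lower_def upper_def glue_def Un_iff insert_iff ms Diff_iff using True xq(2) A1 by auto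
    next
      case False
      thus ?thesis using A1 unfolding lower_def upper_def glue_def by auto
    qed
  qed
  have "upper b G \<subseteq> {..<m}" using G unfolding upper_def by auto
  hence f2: "finite (upper b G)" using finite_subset by blast
  have "lower b G \<subseteq> {..<b}" unfolding lower_def by auto
  hence f1: "finite (lower b G)" using finite_subset by blast
  have fin: "finite (lower b G - A1)" "finite ((+) b ` (upper b G - A2))" using f1 f2 by auto
  have "card (G - glue b A1 A2) = card (lower b G - A1) + card ((+) b ` (upper b G - A2))"
    unfolding e by (rule card_Un_disjoint[OF fin]) (auto simp: lower_def)
  also have "card ((+) b ` (upper b G - A2)) = card (upper b G - A2)" by (rule card_image) auto
  finally show ?thesis .
qed

definition consistent_sum :: "nat \<Rightarrow> nat set \<Rightarrow> nat set \<Rightarrow> nat set \<Rightarrow> int" where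
  "consistent_sum n B G V = (\<Sum>A | B \<subseteq> A \<and> A \<subseteq> {1..<n} \<and> unimodal_cuts A G.
      int (card {xs \<in> permutations_of_set V. consistent n A B (entry xs)}) * (-1) ^ card (G - A))"

lemma consistent_sum_no_blocks:
  assumes "finite V" "card V = n" "G \<subseteq> {1..<n}"
  shows "consistent_sum n {} G V = (if G = {} then fact n else 0)"
proof (cases "n = 0")
  case True
  then have "V = {}" "G = {}" using assms by auto
  moreover have "{A. A \<subseteq> {1..<0::nat} \<and> unimodal_cuts A {}} = {{}}"
    by (auto simp: unimodal_cuts_def)
  moreover have "{xs \<in> permutations_of_set {}. consistent 0 {} {} (entry xs)} = {[]}"
    unfolding consistent_def block_max_def by auto
  ultimately show ?thesis using True unfolding consistent_sum_def by simp
next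
  case False
  have "consistent_sum n {} G V = signed_sum n G"
    unfolding consistent_sum_def signed_sum_def signed_weight_def consistent_def
    by (rule sum.cong) (use card_prefix_max_cuts[OF assms(1,2)] False in auto)
  then show ?thesis using signed_sum_eq[OF _ assms(3)] False by simp
qed

lemma card_consistent_glue:
  assumes V: "finite V" "card V = b + m"
    and A1: "A1 \<subseteq> {1..<b}" and B1: "B1 \<subseteq> {1..<b}" and b: "1 \<le> b"
    and A2: "A2 \<subseteq> {1..<m}" and m: "1 \<le> m"
  shows "card {xs \<in> permutations_of_set V. consistent (b + m) (glue b A1 A2) (insert b B1) (entry xs)} =
    (\<Sum>U | U \<subseteq> V \<and> card U = b. card {ys \<in> permutations_of_set U. consistent b A1 B1 (entry ys)}) *
    \<Prod>({1..<m} - A2)"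
proof -
  have "card {xs \<in> permutations_of_set V. consistent (b + m) (glue b A1 A2) (insert b B1) (entry xs)} =
    (\<Sum>U | U \<subseteq> V \<and> card U = b. card {ys \<in> permutations_of_set U. consistent b A1 B1 (entry ys)} *
       card {zs \<in> permutations_of_set (V - U). \<forall>q\<in>insert m A2. is_prefix_max zs q})"
    using V consistent_append[OF A1 B1 b _ A2 m] by (intro card_permutations_of_set_filter_append) auto
  also have "\<dots> = (\<Sum>U | U \<subseteq> V \<and> card U = b.
      card {ys \<in> permutations_of_set U. consistent b A1 B1 (entry ys)} * \<Prod>({1..<m} - A2))"
  proof (rule sum.cong[OF refl])
    fix U assume "U \<in> {U. U \<subseteq> V \<and> card U = b}"
    then have "card (V - U) = m" using V by (auto simp: card_Diff_subset finite_subset)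
    then show "card {ys \<in> permutations_of_set U. consistent b A1 B1 (entry ys)} *
        card {zs \<in> permutations_of_set (V - U). \<forall>q\<in>insert m A2. is_prefix_max zs q} =
      card {ys \<in> permutations_of_set U. consistent b A1 B1 (entry ys)} * \<Prod>({1..<m} - A2)"
      using card_prefix_max_cuts[OF _ _ m A2] V by simp
  qed
  finally show ?thesis by (simp add: sum_distrib_right)
qed

lemma bij_betw_glue:
  assumes b: "1 \<le> b" and m: "1 \<le> m" and B1: "B1 \<subseteq> {1..<b}"
  shows "bij_betw (\<lambda>(A1, A2). glue b A1 A2)
    ({A1. B1 \<subseteq> A1 \<and> A1 \<subseteq> {1..<b} \<and> unimodal_cuts A1 (lower b G)} \<times>
     {A2. A2 \<subseteq> {1..<m} \<and> unimodal_cuts A2 (upper b G)})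
    {A. insert b B1 \<subseteq> A \<and> A \<subseteq> {1..<b + m} \<and> unimodal_cuts A G}"
proof (rule bij_betw_byWitness[where f' = "\<lambda>A. (lower b A, upper b A)"])
  show "\<forall>A\<in>{A. insert b B1 \<subseteq> A \<and> A \<subseteq> {1..<b + m} \<and> unimodal_cuts A G}.
      (\<lambda>(A1, A2). glue b A1 A2) (lower b A, upper b A) = A"
    using glue_lower_upper b by auto
  show "\<forall>p\<in>{A1. B1 \<subseteq> A1 \<and> A1 \<subseteq> {1..<b} \<and> unimodal_cuts A1 (lower b G)} \<times>
      {A2. A2 \<subseteq> {1..<m} \<and> unimodal_cuts A2 (upper b G)}.
      (lower b ((\<lambda>(A1, A2). glue b A1 A2) p), upper b ((\<lambda>(A1, A2). glue b A1 A2) p)) = p"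
    using lower_glue upper_glue by auto
  show "(\<lambda>(A1, A2). glue b A1 A2) `
      ({A1. B1 \<subseteq> A1 \<and> A1 \<subseteq> {1..<b} \<and> unimodal_cuts A1 (lower b G)} \<times>
       {A2. A2 \<subseteq> {1..<m} \<and> unimodal_cuts A2 (upper b G)})
    \<subseteq> {A. insert b B1 \<subseteq> A \<and> A \<subseteq> {1..<b + m} \<and> unimodal_cuts A G}"
    using unimodal_cuts_glue b m unfolding glue_def by auto
  show "(\<lambda>A. (lower b A, upper b A)) ` {A. insert b B1 \<subseteq> A \<and> A \<subseteq> {1..<b + m} \<and> unimodal_cuts A G}
    \<subseteq> {A1. B1 \<subseteq> A1 \<and> A1 \<subseteq> {1..<b} \<and> unimodal_cuts A1 (lower b G)} \<times>
       {A2. A2 \<subseteq> {1..<m} \<and> unimodal_cuts A2 (upper b G)}"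
  proof (rule image_subsetI)
    fix A assume "A \<in> {A. insert b B1 \<subseteq> A \<and> A \<subseteq> {1..<b + m} \<and> unimodal_cuts A G}"
    then have A: "insert b B1 \<subseteq> A" "A \<subseteq> {1..<b + m}" "unimodal_cuts A G" by auto
    have parts: "lower b A \<subseteq> {1..<b}" "upper b A \<subseteq> {1..<m}"
      using A(2) unfolding lower_def upper_def by auto
    moreover have "B1 \<subseteq> lower b A" using A(1) B1 unfolding lower_def by auto
    moreover have "unimodal_cuts (lower b A) (lower b G) \<and> unimodal_cuts (upper b A) (upper b G)"
      using A glue_lower_upper[of b A m] unimodal_cuts_glue[OF parts b] b by simp
    ultimately show "(lower b A, upper b A) \<in>
        {A1. B1 \<subseteq> A1 \<and> A1 \<subseteq> {1..<b} \<and> unimodal_cuts A1 (lower b G)} \<times>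
        {A2. A2 \<subseteq> {1..<m} \<and> unimodal_cuts A2 (upper b G)}" by simp
  qed
qed

lemma consistent_sum_split:
  assumes V: "finite V" "card V = b + m" and b: "1 \<le> b" and m: "1 \<le> m"
    and B1: "B1 \<subseteq> {1..<b}" and G: "G \<subseteq> {1..<b + m}"
  shows "consistent_sum (b + m) (insert b B1) G V =
    (\<Sum>U | U \<subseteq> V \<and> card U = b. consistent_sum b B1 (lower b G) U) * signed_sum m (upper b G)"
proof -
  let ?A1s = "{A1. B1 \<subseteq> A1 \<and> A1 \<subseteq> {1..<b} \<and> unimodal_cuts A1 (lower b G)}"
  let ?A2s = "{A2. A2 \<subseteq> {1..<m} \<and> unimodal_cuts A2 (upper b G)}"
  let ?Us = "{U. U \<subseteq> V \<and> card U = b}"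
  let ?f = "\<lambda>A. int (card {xs \<in> permutations_of_set V. consistent (b + m) A (insert b B1) (entry xs)}) *
    (-1) ^ card (G - A)"
  let ?g = "\<lambda>U A1. int (card {ys \<in> permutations_of_set U. consistent b A1 B1 (entry ys)}) *
    (-1) ^ card (lower b G - A1)"
  have glued: "?f (glue b A1 A2) = (\<Sum>U\<in>?Us. ?g U A1) * signed_weight m (upper b G) A2"
    if "A1 \<in> ?A1s" "A2 \<in> ?A2s" for A1 A2
  proof -
    have A: "A1 \<subseteq> {1..<b}" "A2 \<subseteq> {1..<m}" using that by auto
    show ?thesis
      unfolding card_consistent_glue[OF V A(1) B1 b A(2) m] card_diff_glue[OF A b G]
        signed_weight_def power_add of_nat_mult of_nat_sum sum_distrib_right
      by (simp add: algebra_simps)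
  qed
  have "consistent_sum (b + m) (insert b B1) G V = (\<Sum>(A1, A2) \<in> ?A1s \<times> ?A2s. ?f (glue b A1 A2))"
    unfolding consistent_sum_def
    using sum.reindex_bij_betw[OF bij_betw_glue[OF b m B1, of G], of ?f] by (simp add: case_prod_beta')
  also have "\<dots> = (\<Sum>A1\<in>?A1s. \<Sum>A2\<in>?A2s. ?f (glue b A1 A2))"
    by (rule sum.cartesian_product[symmetric])
  also have "\<dots> = (\<Sum>A1\<in>?A1s. \<Sum>A2\<in>?A2s. (\<Sum>U\<in>?Us. ?g U A1) * signed_weight m (upper b G) A2)"
    by (rule sum.cong[OF refl], rule sum.cong[OF refl], rule glued)
  also have "\<dots> = (\<Sum>A1\<in>?A1s. \<Sum>U\<in>?Us. ?g U A1) * signed_sum m (upper b G)"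
    unfolding signed_sum_def sum_product ..
  also have "\<dots> = (\<Sum>U\<in>?Us. consistent_sum b B1 (lower b G) U) * signed_sum m (upper b G)"
    unfolding consistent_sum_def by (subst sum.swap) simp
  finally show ?thesis .
qed

lemma subset_insert_iff_lower_upper:
  assumes "B1 \<subseteq> {1..<b}"
  shows "G \<subseteq> insert b B1 \<longleftrightarrow> lower b G \<subseteq> B1 \<and> upper b G = {}"
proof
  assume G: "G \<subseteq> insert b B1"
  then have "lower b G \<subseteq> B1" unfolding lower_def by auto
  moreover have "b + q \<notin> G" if "1 \<le> q" for q using G assms that by fastforce
  ultimately show "lower b G \<subseteq> B1 \<and> upper b G = {}" unfolding upper_def by auto
next
  assume parts: "lower b G \<subseteq> B1 \<and> upper b G = {}"
  show "G \<subseteq> insert b B1"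
  proof
    fix g assume "g \<in> G"
    moreover have "g - b \<notin> upper b G" using parts by simp
    ultimately show "g \<in> insert b B1"
      using parts unfolding lower_def upper_def by (cases "g < b") auto
  qed
qed

lemma split_off_max_cut:
  fixes B :: "nat set"
  assumes "B \<noteq> {}" "B \<subseteq> {1..<n}"
  obtains b B1 m where "B = insert b B1" "B1 \<subseteq> {1..<b}" "1 \<le> b" "1 \<le> m" "n = b + m"
proof -
  define b where "b = Max B"
  have "finite B" using assms(2) finite_subset by blast
  then have "b \<in> B" "B - {b} \<subseteq> {1..<b}"
    using assms unfolding b_def by (auto simp: order.not_eq_order_implies_strict)
  moreover have "1 \<le> b" "b < n" using \<open>b \<in> B\<close> assms(2) by auto
  ultimately show ?thesis using that[of b "B - {b}" "n - b"] by auto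
qed

lemma fact_eq_choose_fact_fact: "b \<le> n \<Longrightarrow> (fact n :: int) = of_nat (n choose b) * fact b * fact (n - b)"
proof -
  assume "b \<le> n"
  then have "fact b * fact (n - b) * (n choose b) = (fact n :: nat)" by (rule binomial_fact_lemma)
  then have "(fact n :: int) = of_nat (fact b * fact (n - b) * (n choose b))" by (simp only: of_nat_fact)
  then show ?thesis by (simp add: of_nat_fact)
qed

lemma consistent_sum_eq:
  assumes "finite V" "card V = n" "B \<subseteq> {1..<n}" "G \<subseteq> {1..<n}"
  shows "consistent_sum n B G V = (if G \<subseteq> B then fact n else 0)"
  using assms
proof (induction n arbitrary: B G V rule: less_induct)
  case (less n)
  show ?case
  proof (cases "B = {}")
    case True
    then show ?thesis using consistent_sum_no_blocks less.prems by simp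
  next
    case False
    then obtain b B1 m where B: "B = insert b B1" and B1: "B1 \<subseteq> {1..<b}"
      and bm: "1 \<le> b" "1 \<le> m" "n = b + m"
      using split_off_max_cut less.prems(3) by blast
    have lower: "consistent_sum b B1 (lower b G) U = (if lower b G \<subseteq> B1 then fact b else 0)"
      if "U \<subseteq> V" "card U = b" for U
    proof -
      have "lower b G \<subseteq> {1..<b}" using less.prems(4) unfolding lower_def by auto
      moreover have "b < n" using bm by simp
      ultimately show ?thesis
        using less.IH[OF _ finite_subset[OF that(1) less.prems(1)] that(2) B1] by simp
    qed
    have upper: "signed_sum m (upper b G) = (if upper b G = {} then fact m else 0)"
    proof -
      have "upper b G \<subseteq> {1..<m}" using less.prems(4) bm(3) unfolding upper_def by auto
      then show ?thesis using signed_sum_eq[OF bm(2)] by simp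
    qed
    have "(\<Sum>U | U \<subseteq> V \<and> card U = b. consistent_sum b B1 (lower b G) U) =
        (\<Sum>U | U \<subseteq> V \<and> card U = b. if lower b G \<subseteq> B1 then fact b else 0)"
      by (rule sum.cong) (simp_all add: lower)
    moreover have "card {U. U \<subseteq> V \<and> card U = b} = n choose b"
      using n_subsets[OF less.prems(1)] less.prems(2) by simp
    moreover have "consistent_sum n B G V =
        (\<Sum>U | U \<subseteq> V \<and> card U = b. consistent_sum b B1 (lower b G) U) * signed_sum m (upper b G)"
      unfolding B bm(3) by (rule consistent_sum_split) (use less.prems bm B1 in \<open>simp_all\<close>)
    ultimately have "consistent_sum n B G V = of_nat (n choose b) *
        (if lower b G \<subseteq> B1 then fact b else 0) * (if upper b G = {} then fact m else 0)"
      unfolding upper by simp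
    moreover have "(fact n :: int) = of_nat (n choose b) * fact b * fact m"
      using fact_eq_choose_fact_fact[of b n] bm by simp
    ultimately show ?thesis unfolding B subset_insert_iff_lower_upper[OF B1]
      by (cases "lower b G \<subseteq> B1"; cases "upper b G = {}") simp_all
  qed
qed

section \<open>Compositions as cut sets\<close>

abbreviation psum :: "nat list \<Rightarrow> nat \<Rightarrow> nat" where "psum \<alpha> i \<equiv> sum_list (take i \<alpha>)"

lemma psum_Suc: "i < length \<alpha> \<Longrightarrow> psum \<alpha> (Suc i) = psum \<alpha> i + \<alpha> ! i"
  by (simp add: take_Suc_conv_app_nth)

lemma psum_strict_mono:
  assumes "is_comp n \<alpha>" "i < j" "j \<le> length \<alpha>"
  shows "psum \<alpha> i < psum \<alpha> j"
  using assms(2,3)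
proof (induction j)
  case 0 then show ?case by simp
next
  case (Suc j)
  have pos: "0 < \<alpha> ! j" using assms(1) Suc.prems unfolding is_comp_def by auto
  have e: "psum \<alpha> (Suc j) = psum \<alpha> j + \<alpha> ! j" using Suc.prems by (simp add: psum_Suc)
  show ?case
  proof (cases "i = j")
    case True then show ?thesis using e pos by simp
  next
    case False
    hence "psum \<alpha> i < psum \<alpha> j" using Suc by simp
    then show ?thesis using e by simp
  qed
qed

lemma psum_less_iff:
  assumes "is_comp n \<alpha>" "i \<le> length \<alpha>" "j \<le> length \<alpha>"
  shows "psum \<alpha> i < psum \<alpha> j \<longleftrightarrow> i < j"
  using psum_strict_mono[OF assms(1)] assms(2,3)
  by (metis less_asym linorder_neqE_nat)

lemma psum_le_iff:
  assumes "is_comp n \<alpha>" "i \<le> length \<alpha>" "j \<le> length \<alpha>"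
  shows "psum \<alpha> i \<le> psum \<alpha> j \<longleftrightarrow> i \<le> j"
  using psum_less_iff[OF assms(1) assms(3) assms(2)] by linarith

lemma psum_length: "is_comp n \<alpha> \<Longrightarrow> psum \<alpha> (length \<alpha>) = n"
  unfolding is_comp_def by simp

lemma is_comp_length_pos: "is_comp n \<alpha> \<Longrightarrow> 1 \<le> n \<Longrightarrow> 1 \<le> length \<alpha>"
  unfolding is_comp_def by (cases \<alpha>) auto

lemma psum_locate:
  assumes "is_comp n \<alpha>" "1 \<le> p" "p \<le> n"
  shows "\<exists>i. 1 \<le> i \<and> i \<le> length \<alpha> \<and> psum \<alpha> (i - 1) < p \<and> p \<le> psum \<alpha> i"
proof -
  define i where "i = (LEAST i. p \<le> psum \<alpha> i)"
  have ex: "p \<le> psum \<alpha> (length \<alpha>)" using psum_length[OF assms(1)] assms by simp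
  have pi: "p \<le> psum \<alpha> i" unfolding i_def by (rule LeastI[of _ "length \<alpha>"]) (rule ex)
  have il: "i \<le> length \<alpha>" unfolding i_def by (rule Least_le) (rule ex)
  have i0: "i \<noteq> 0" using pi assms(2) by (cases i) auto
  have "\<not> p \<le> psum \<alpha> (i - 1)" unfolding i_def
    by (rule not_less_Least) (use i0 i_def in simp)
  thus ?thesis using pi il i0 by (intro exI[of _ i]) auto
qed

lemma Sset_eq_image: "Sset \<alpha> = psum \<alpha> ` {1..<length \<alpha>}"
  unfolding Sset_def by auto

lemma Sset_subset:
  assumes "is_comp n \<alpha>" shows "Sset \<alpha> \<subseteq> {1..<n}"
proof
  fix x assume "x \<in> Sset \<alpha>"
  then obtain i where i: "1 \<le> i" "i < length \<alpha>" "x = psum \<alpha> i" unfolding Sset_eq_image by auto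
  have "psum \<alpha> 0 < psum \<alpha> i" using psum_strict_mono[OF assms, of 0 i] i by simp
  moreover have "psum \<alpha> i < psum \<alpha> (length \<alpha>)" using psum_strict_mono[OF assms, of i "length \<alpha>"] i by simp
  ultimately show "x \<in> {1..<n}" using i psum_length[OF assms] by auto
qed

lemma Sset_snoc: "Sset (xs @ [c]) = (if xs = [] then {} else insert (sum_list xs) (Sset xs))"
proof (cases "xs = []")
  case True then show ?thesis unfolding Sset_def by simp
next
  case False
  have "Sset (xs @ [c]) = (\<lambda>i. psum (xs @ [c]) i) ` {1..<Suc (length xs)}" unfolding Sset_eq_image by simp
  also have "\<dots> = psum xs ` {1..length xs}"
    by (rule image_cong) auto
  also have "{1..length xs} = insert (length xs) {1..<length xs}" using False by (cases xs) auto
  finally show ?thesis using False unfolding Sset_eq_image by simp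
qed

lemma is_comp_0: "is_comp 0 \<alpha> \<Longrightarrow> \<alpha> = []"
  unfolding is_comp_def by (cases \<alpha>) auto

lemma is_comp_snoc: "is_comp n (xs @ [c]) \<longleftrightarrow> 0 < c \<and> is_comp (n - c) xs \<and> c \<le> n"
  unfolding is_comp_def by auto

lemma Sset_inj:
  "is_comp n \<alpha> \<Longrightarrow> is_comp n \<alpha>' \<Longrightarrow> Sset \<alpha> = Sset \<alpha>' \<Longrightarrow> \<alpha> = \<alpha>'"
proof (induction \<alpha> arbitrary: n \<alpha>' rule: rev_induct)
  case Nil
  hence "n = 0" unfolding is_comp_def by simp
  then show ?case using is_comp_0[of \<alpha>'] Nil by simp
next
  case (snoc c xs)
  have c: "0 < c" "is_comp (n - c) xs" "c \<le> n" using snoc.prems(1) is_comp_snoc by auto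
  have "\<alpha>' \<noteq> []" using snoc.prems(1,2) c unfolding is_comp_def by auto
  then obtain ys d where a': "\<alpha>' = ys @ [d]" by (metis rev_exhaust)
  have d: "0 < d" "is_comp (n - d) ys" "d \<le> n" using snoc.prems(2) a' is_comp_snoc by auto
  have sx: "sum_list xs = n - c" "sum_list ys = n - d" using c d unfolding is_comp_def by auto
  show ?case
  proof (cases "xs = []")
    case True
    hence "Sset \<alpha>' = {}" using snoc.prems(3) Sset_snoc[of xs c] by simp
    hence "ys = []" using a' Sset_snoc[of ys d] by (cases "ys = []") auto
    then show ?thesis using True sx a' c d by simp
  next
    case False
    hence "Sset \<alpha>' \<noteq> {}" using snoc.prems(3) Sset_snoc[of xs c] by (metis insert_not_empty)
    hence ysne: "ys \<noteq> []" using a' Sset_snoc[of ys d] by auto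
    have M: "\<And>zs e m. is_comp m zs \<Longrightarrow> zs \<noteq> [] \<Longrightarrow> Max (Sset (zs @ [e])) = sum_list zs"
    proof -
      fix zs e m assume z: "is_comp m zs" "zs \<noteq> []"
      have "Sset zs \<subseteq> {1..<m}" "sum_list zs = m" using Sset_subset[OF z(1)] z(1) unfolding is_comp_def by auto
      moreover have "finite (Sset zs)" using Sset_subset[OF z(1)] finite_subset by blast
      ultimately show "Max (Sset (zs @ [e])) = sum_list zs" unfolding Sset_snoc using z(2)
        by (intro Max_eqI) auto
    qed
    have "sum_list xs = sum_list ys" using M[OF c(2) False] M[OF d(2) ysne] snoc.prems(3) a' by metis
    hence cd: "c = d" "n - c = n - d" using sx c d by auto
    have nin: "\<And>zs m. is_comp m zs \<Longrightarrow> sum_list zs \<notin> Sset zs"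
      using Sset_subset unfolding is_comp_def by fastforce
    have "Sset xs = Sset (xs @ [c]) - {sum_list xs}" using Sset_snoc[of xs c] False nin[OF c(2)] by auto
    also have "\<dots> = Sset (ys @ [d]) - {sum_list ys}" using snoc.prems(3) a' \<open>sum_list xs = sum_list ys\<close> by simp
    also have "\<dots> = Sset ys" using Sset_snoc[of ys d] ysne nin[OF d(2)] by auto
    finally have "xs = ys" using snoc.IH[OF c(2)] d(2) cd by simp
    then show ?thesis using a' cd by simp
  qed
qed

lemma Sset_surj:
  "A \<subseteq> {1..<n} \<Longrightarrow> \<exists>\<alpha>. is_comp n \<alpha> \<and> Sset \<alpha> = A"
proof (induction n arbitrary: A rule: less_induct)
  case (less n)
  show ?case
  proof (cases "A = {}")
    case True
    show ?thesis
    proof (cases "n = 0")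
      case True
      then show ?thesis using \<open>A = {}\<close> by (intro exI[of _ "[]"]) (simp add: is_comp_def Sset_def)
    next
      case False
      then show ?thesis using \<open>A = {}\<close> by (intro exI[of _ "[n]"]) (simp add: is_comp_def Sset_def)
    qed
  next
    case False
    define a where "a = Max A"
    have fA: "finite A" using less.prems finite_subset by blast
    have aA: "a \<in> A" using fA False unfolding a_def by simp
    have a1: "1 \<le> a" "a < n" using aA less.prems by auto
    have "A - {a} \<subseteq> {1..<a}"
    proof
      fix x assume "x \<in> A - {a}"
      moreover hence "x \<le> a" unfolding a_def using fA by simp
      ultimately show "x \<in> {1..<a}" using less.prems by fastforce
    qed
    then obtain \<alpha>0 where a0: "is_comp a \<alpha>0" "Sset \<alpha>0 = A - {a}" using less.IH[OF a1(2)] by blast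
    have ne: "\<alpha>0 \<noteq> []" using a0 a1 unfolding is_comp_def by auto
    have "is_comp n (\<alpha>0 @ [n - a])" using a0 a1 unfolding is_comp_def by auto
    moreover have "Sset (\<alpha>0 @ [n - a]) = A" using Sset_snoc[of \<alpha>0 "n - a"] ne a0 aA
      unfolding is_comp_def by auto
    ultimately show ?thesis by blast
  qed
qed

lemma block_eq: "block \<alpha> i = {psum \<alpha> (i - 1) + 1 .. psum \<alpha> i}"
  unfolding block_def by simp

lemma no_cut_within_block:
  assumes "is_comp n \<alpha>" "1 \<le> i" "i \<le> length \<alpha>" "psum \<alpha> (i - 1) < x" "y \<le> psum \<alpha> i"
  shows "{x..<y} \<inter> Sset \<alpha> = {}"
proof -
  have "psum \<alpha> u \<notin> {x..<y}" if "1 \<le> u" "u < length \<alpha>" for u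
  proof
    assume "psum \<alpha> u \<in> {x..<y}"
    then have "psum \<alpha> (i - 1) < psum \<alpha> u" "psum \<alpha> u < psum \<alpha> i" using assms(4,5) by auto
    then have "i - 1 < u" "u < i" using psum_less_iff[OF assms(1)] assms(3) that by auto
    then show False by simp
  qed
  then show ?thesis unfolding Sset_eq_image by auto
qed

lemma no_cut_stays_in_block:
  assumes "is_comp n \<alpha>" "i < length \<alpha>" "psum \<alpha> i < p" "1 \<le> j" "{j..<p} \<inter> Sset \<alpha> = {}"
  shows "psum \<alpha> i < j"
proof (cases "i = 0")
  case False
  then have "psum \<alpha> i \<in> Sset \<alpha>" using assms(2) unfolding Sset_def by auto
  then have "psum \<alpha> i \<notin> {j..<p}" using assms(5) by blast
  then show ?thesis using assms(3) by simp
qed (use assms(4) in simp)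

lemma unimodal_iff_unimodal_cuts:
  assumes c: "is_comp n \<alpha>" and G: "G \<subseteq> {1..<n}"
  shows "unimodal \<alpha> G \<longleftrightarrow> unimodal_cuts (Sset \<alpha>) G"
proof
  assume u: "unimodal \<alpha> G"
  show "unimodal_cuts (Sset \<alpha>) G" unfolding unimodal_cuts_def
  proof (intro ballI allI impI)
    fix x y assume x: "x \<in> G - Sset \<alpha>" and y: "1 \<le> y \<and> y < x \<and> {y..<x} \<inter> Sset \<alpha> = {}"
    have "1 \<le> x" "x \<le> n" using x G by auto
    then obtain i where i: "1 \<le> i" "i \<le> length \<alpha>" "psum \<alpha> (i - 1) < x" "x \<le> psum \<alpha> i"
      using psum_locate[OF c] by blast
    have "psum \<alpha> (i - 1) < y" using no_cut_stays_in_block[OF c _ i(3)] i(1,2) y by simp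
    then have "y \<in> block \<alpha> i - Sset \<alpha>" "x \<in> G \<inter> (block \<alpha> i - Sset \<alpha>)"
      unfolding block_eq using x y i by auto
    then show "y \<in> G" using u i y unfolding unimodal_def by auto
  qed
next
  assume u: "unimodal_cuts (Sset \<alpha>) G"
  show "unimodal \<alpha> G" unfolding unimodal_def
  proof (intro ballI impI)
    fix i x y assume i: "i \<in> {1..length \<alpha>}" and x: "x \<in> G \<inter> (block \<alpha> i - Sset \<alpha>)"
      and y: "y \<in> block \<alpha> i - Sset \<alpha>" and "y < x"
    moreover have "psum \<alpha> (i - 1) < y" "x \<le> psum \<alpha> i" using x y unfolding block_eq by auto
    then have "{y..<x} \<inter> Sset \<alpha> = {}" using no_cut_within_block[OF c] i by auto
    ultimately show "y \<in> G" using u \<open>psum \<alpha> (i - 1) < y\<close> unfolding unimodal_cuts_def by auto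
  qed
qed

section \<open>Consistent permutations\<close>

lemma insert_Sset:
  assumes "is_comp n \<alpha>" "1 \<le> n"
  shows "insert n (Sset \<alpha>) = psum \<alpha> ` {1..length \<alpha>}"
proof -
  have l: "1 \<le> length \<alpha>" using is_comp_length_pos[OF assms] .
  have "{1..length \<alpha>} = insert (length \<alpha>) {1..<length \<alpha>}" using l by auto
  thus ?thesis unfolding Sset_eq_image using psum_length[OF assms(1)] by simp
qed

lemma block_subset_iff:
  assumes "is_comp n \<alpha>" "1 \<le> i" "i \<le> length \<alpha>"
  shows "block \<alpha> i \<subseteq> block \<beta> k \<longleftrightarrow> psum \<beta> (k - 1) \<le> psum \<alpha> (i - 1) \<and> psum \<alpha> i \<le> psum \<beta> k"
proof -
  have "psum \<alpha> (i - 1) < psum \<alpha> i" using psum_strict_mono[OF assms(1), of "i - 1" i] assms by simp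
  thus ?thesis unfolding block_eq by (subst atLeastatMost_subset_iff) auto
qed

lemma Max_image_block:
  assumes c: "is_comp n \<alpha>" and i: "1 \<le> i" "i \<le> length \<alpha>"
    and H: "\<And>j. j \<in> block \<alpha> i \<Longrightarrow> j \<noteq> psum \<alpha> i \<Longrightarrow> \<sigma> j < \<sigma> (psum \<alpha> i)"
  shows "Max (\<sigma> ` block \<alpha> i) = \<sigma> (psum \<alpha> i)"
proof (rule Max_eqI)
  show "finite (\<sigma> ` block \<alpha> i)" unfolding block_eq by simp
  have "psum \<alpha> (i - 1) < psum \<alpha> i" using psum_strict_mono[OF c, of "i - 1" i] i by simp
  thus "\<sigma> (psum \<alpha> i) \<in> \<sigma> ` block \<alpha> i" unfolding block_eq by auto
  fix y assume "y \<in> \<sigma> ` block \<alpha> i"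
  then obtain j where "j \<in> block \<alpha> i" "y = \<sigma> j" by auto
  thus "y \<le> \<sigma> (psum \<alpha> i)" using H by (cases "j = psum \<alpha> i") (auto intro: less_imp_le)
qed

lemma coarser_block_start:
  assumes a: "is_comp n \<alpha>" and le: "comp_le \<alpha> \<beta>"
    and k: "k \<le> length \<beta>" and r: "1 \<le> r" "r \<le> length \<alpha>" and lt: "psum \<beta> (k - 1) < psum \<alpha> r"
  shows "psum \<beta> (k - 1) \<le> psum \<alpha> (r - 1)"
proof (cases "k - 1 = 0")
  case False
  then have "k - 1 \<in> {1..<length \<beta>}" using k by auto
  then have "psum \<beta> (k - 1) \<in> Sset \<beta>" unfolding Sset_eq_image by (rule imageI)
  then have "psum \<beta> (k - 1) \<in> Sset \<alpha>" using le unfolding comp_le_def by blast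
  then obtain u where u: "1 \<le> u" "u < length \<alpha>" "psum \<beta> (k - 1) = psum \<alpha> u"
    unfolding Sset_eq_image by auto
  then have "u < r" using psum_less_iff[OF a, of u r] r lt by simp
  then show ?thesis using psum_le_iff[OF a, of u "r - 1"] u r by simp
qed simp

lemma consistent_if_CONS:
  assumes a: "is_comp n \<alpha>" and b: "is_comp n \<beta>" and le: "comp_le \<alpha> \<beta>" and n1: "1 \<le> n"
    and \<sigma>: "\<sigma> \<in> CONS n \<alpha> \<beta>"
  shows "consistent n (Sset \<alpha>) (Sset \<beta>) \<sigma>"
  unfolding consistent_def block_max_def
proof (intro ballI allI impI)
  have perm: "\<sigma> permutes {1..n}" and last_max: "\<forall>i\<in>{1..length \<alpha>}. \<sigma> (psum \<alpha> i) = Max (\<sigma> ` block \<alpha> i)"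
    and increasing: "\<forall>k\<in>{1..length \<beta>}. \<forall>r\<in>{1..length \<alpha>}. \<forall>r'\<in>{1..length \<alpha>}.
        r < r' \<and> block \<alpha> r \<subseteq> block \<beta> k \<and> block \<alpha> r' \<subseteq> block \<beta> k \<longrightarrow>
        Max (\<sigma> ` block \<alpha> r) < Max (\<sigma> ` block \<alpha> r')"
    using \<sigma> unfolding CONS_def by auto
  have inj: "inj \<sigma>" using perm permutes_inj by blast
  fix p j assume p: "p \<in> insert n (Sset \<alpha>)" and j: "1 \<le> j \<and> j < p \<and> {j..<p} \<inter> Sset \<beta> = {}"
  obtain i where i: "1 \<le> i" "i \<le> length \<alpha>" "p = psum \<alpha> i" using p insert_Sset[OF a n1] by auto
  have pn: "p \<le> n" using i psum_le_iff[OF a i(2), of "length \<alpha>"] psum_length[OF a] by simp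
  obtain r where r: "1 \<le> r" "r \<le> length \<alpha>" "psum \<alpha> (r - 1) < j" "j \<le> psum \<alpha> r"
    using psum_locate[OF a, of j] j pn by auto
  have "r - 1 < i" using psum_less_iff[OF a, of "r - 1" i] r i j by simp
  then have ri: "r \<le> i" by simp
  have "j \<in> block \<alpha> r" "finite (block \<alpha> r)" unfolding block_eq using r by auto
  then have j_le: "\<sigma> j \<le> Max (\<sigma> ` block \<alpha> r)" by simp
  show "\<sigma> j < \<sigma> p"
  proof (cases "r = i")
    case True
    moreover have "\<sigma> j \<noteq> \<sigma> p" using inj j by (metis injD less_irrefl)
    ultimately show ?thesis using j_le last_max i by (simp add: order.not_eq_order_implies_strict)
  next
    case False
    obtain k where k: "1 \<le> k" "k \<le> length \<beta>" "psum \<beta> (k - 1) < p" "p \<le> psum \<beta> k"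
      using psum_locate[OF b, of p] j pn by auto
    have "psum \<beta> (k - 1) < j" using no_cut_stays_in_block[OF b _ k(3)] k(1,2) j by simp
    then have start: "psum \<beta> (k - 1) \<le> psum \<alpha> (r - 1)"
      using coarser_block_start[OF a le k(2) r(1,2)] r(4) by simp
    have "psum \<alpha> r \<le> psum \<alpha> i" "psum \<alpha> (r - 1) \<le> psum \<alpha> (i - 1)"
      using psum_le_iff[OF a] ri r i by simp_all
    then have "block \<alpha> r \<subseteq> block \<beta> k" "block \<alpha> i \<subseteq> block \<beta> k"
      using block_subset_iff[OF a r(1,2)] block_subset_iff[OF a i(1,2)] start k i by simp_all
    moreover have "r < i" using ri False by simp
    ultimately have "Max (\<sigma> ` block \<alpha> r) < Max (\<sigma> ` block \<alpha> i)"
      using increasing k(1,2) r(1,2) i(1,2) by simp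
    then show ?thesis using j_le last_max i by simp
  qed
qed

lemma CONS_if_consistent:
  assumes a: "is_comp n \<alpha>" and b: "is_comp n \<beta>" and le: "comp_le \<alpha> \<beta>" and n1: "1 \<le> n"
    and perm: "\<sigma> permutes {1..n}" and cons: "consistent n (Sset \<alpha>) (Sset \<beta>) \<sigma>"
  shows "\<sigma> \<in> CONS n \<alpha> \<beta>"
proof -
  have ends: "psum \<alpha> i \<in> insert n (Sset \<alpha>)" if "1 \<le> i" "i \<le> length \<alpha>" for i
    using insert_Sset[OF a n1] that by auto
  have last_max: "Max (\<sigma> ` block \<alpha> i) = \<sigma> (psum \<alpha> i)" if i: "1 \<le> i" "i \<le> length \<alpha>" for i
  proof (rule Max_image_block[OF a i])
    fix j assume "j \<in> block \<alpha> i" "j \<noteq> psum \<alpha> i"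
    then have j: "psum \<alpha> (i - 1) < j" "j < psum \<alpha> i" unfolding block_eq by auto
    then have "{j..<psum \<alpha> i} \<inter> Sset \<alpha> = {}" using no_cut_within_block[OF a i] by simp
    then have "{j..<psum \<alpha> i} \<inter> Sset \<beta> = {}" using le unfolding comp_le_def by blast
    then show "\<sigma> j < \<sigma> (psum \<alpha> i)"
      using cons ends[OF i] j unfolding consistent_def block_max_def by auto
  qed
  have "Max (\<sigma> ` block \<alpha> r) < Max (\<sigma> ` block \<alpha> r')"
    if k: "k \<in> {1..length \<beta>}" and r: "r \<in> {1..length \<alpha>}" and r': "r' \<in> {1..length \<alpha>}"
      and h: "r < r'" "block \<alpha> r \<subseteq> block \<beta> k" "block \<alpha> r' \<subseteq> block \<beta> k" for k r r'
  proof -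
    have "psum \<beta> (k - 1) \<le> psum \<alpha> (r - 1)" "psum \<alpha> r' \<le> psum \<beta> k"
      using block_subset_iff[OF a, of r \<beta> k] block_subset_iff[OF a, of r' \<beta> k] r r' h by auto
    moreover have "psum \<alpha> (r - 1) < psum \<alpha> r" "psum \<alpha> r < psum \<alpha> r'"
      using psum_less_iff[OF a] r r' h(1) by auto
    ultimately have "{psum \<alpha> r..<psum \<alpha> r'} \<inter> Sset \<beta> = {}"
      using no_cut_within_block[OF b, of k "psum \<alpha> r" "psum \<alpha> r'"] k by simp
    moreover have "block_max (Sset \<beta>) \<sigma> (psum \<alpha> r')"
      using cons ends r' unfolding consistent_def by auto
    ultimately have "\<sigma> (psum \<alpha> r) < \<sigma> (psum \<alpha> r')"
      using \<open>psum \<alpha> (r - 1) < psum \<alpha> r\<close> \<open>psum \<alpha> r < psum \<alpha> r'\<close>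
      unfolding block_max_def by simp
    then show ?thesis using last_max r r' by auto
  qed
  then show ?thesis unfolding CONS_def using perm last_max by auto
qed

lemma CONS_eq_consistent:
  assumes "is_comp n \<alpha>" "is_comp n \<beta>" "comp_le \<alpha> \<beta>" "1 \<le> n"
  shows "CONS n \<alpha> \<beta> = {\<sigma>. \<sigma> permutes {1..n} \<and> consistent n (Sset \<alpha>) (Sset \<beta>) \<sigma>}"
  using consistent_if_CONS[OF assms] CONS_if_consistent[OF assms] unfolding CONS_def by blast

lemma nth_map_upt_shift: "1 \<le> j \<Longrightarrow> j \<le> n \<Longrightarrow> map \<sigma> [1..<Suc n] ! (j - 1) = \<sigma> j"
proof -
  assume j: "1 \<le> j" "j \<le> n"
  hence l: "j - 1 < length [1..<Suc n]" by (simp del: upt_Suc)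
  have "[1..<Suc n] ! (j - 1) = 1 + (j - 1)" using j by (intro nth_upt) simp
  also have "\<dots> = j" using j by simp
  finally show ?thesis using l by (simp del: upt_Suc)
qed

lemma inj_on_permutes_list: "inj_on (\<lambda>\<sigma>. map \<sigma> [1..<Suc n]) {\<sigma>. \<sigma> permutes {1..n}}"
proof (rule inj_onI)
  fix \<sigma> \<tau> assume s: "\<sigma> \<in> {\<sigma>. \<sigma> permutes {1..n}}" and t: "\<tau> \<in> {\<sigma>. \<sigma> permutes {1..n}}"
    and e: "map \<sigma> [1..<Suc n] = map \<tau> [1..<Suc n]"
  show "\<sigma> = \<tau>"
  proof
    fix x show "\<sigma> x = \<tau> x"
    proof (cases "x \<in> {1..n}")
      case True
      have "map \<sigma> [1..<Suc n] ! (x - 1) = map \<tau> [1..<Suc n] ! (x - 1)" by (simp only: e)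
      thus ?thesis using True nth_map_upt_shift[of x n \<sigma>] nth_map_upt_shift[of x n \<tau>] by simp
    next
      case False
      have "\<sigma> permutes {1..n}" "\<tau> permutes {1..n}" using s t by auto
      thus ?thesis using False permutes_not_in by metis
    qed
  qed
qed

lemma permutes_list_image: "(\<lambda>\<sigma>. map \<sigma> [1..<Suc n]) ` {\<sigma>. \<sigma> permutes {1..n}} = permutations_of_set {1..n}"
proof (rule card_subset_eq)
  show "finite (permutations_of_set {1..n})" by simp
  show "(\<lambda>\<sigma>. map \<sigma> [1..<Suc n]) ` {\<sigma>. \<sigma> permutes {1..n}} \<subseteq> permutations_of_set {1..n}"
  proof
    fix xs assume "xs \<in> (\<lambda>\<sigma>. map \<sigma> [1..<Suc n]) ` {\<sigma>. \<sigma> permutes {1..n}}"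
    then obtain \<sigma> where s: "\<sigma> permutes {1..n}" "xs = map \<sigma> [1..<Suc n]" by auto
    have "set xs = \<sigma> ` {1..n}" using s by auto
    also have "\<dots> = {1..n}" using permutes_image[OF s(1)] .
    finally have "set xs = {1..n}" .
    moreover have "distinct xs" using s permutes_inj[OF s(1)] by (simp add: distinct_map inj_on_subset)
    ultimately show "xs \<in> permutations_of_set {1..n}" by (simp add: permutations_of_set_def)
  qed
  have "card ((\<lambda>\<sigma>. map \<sigma> [1..<Suc n]) ` {\<sigma>. \<sigma> permutes {1..n}}) = card {\<sigma>. \<sigma> permutes {1..n}}"
    by (rule card_image[OF inj_on_permutes_list])
  also have "\<dots> = fact n" by (rule card_permutations) auto
  finally show "card ((\<lambda>\<sigma>. map \<sigma> [1..<Suc n]) ` {\<sigma>. \<sigma> permutes {1..n}}) = card (permutations_of_set {1..n})"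
    by simp
qed

lemma consistent_cong:
  assumes "A \<subseteq> {1..<n}" "\<And>j. 1 \<le> j \<Longrightarrow> j \<le> n \<Longrightarrow> f j = g j"
  shows "consistent n A B f \<longleftrightarrow> consistent n A B g"
proof -
  have "block_max B f p \<longleftrightarrow> block_max B g p" if "p \<in> insert n A" for p
    using that assms by (intro block_max_cong) auto
  then show ?thesis unfolding consistent_def by blast
qed

lemma card_consistent_permutes:
  assumes "A \<subseteq> {1..<n}"
  shows "card {\<sigma>. \<sigma> permutes {1..n} \<and> consistent n A B \<sigma>} =
    card {xs \<in> permutations_of_set {1..n}. consistent n A B (entry xs)}"
proof -
  let ?list = "\<lambda>\<sigma>. map \<sigma> [1..<Suc n]"
  have same: "consistent n A B (entry (?list \<sigma>)) \<longleftrightarrow> consistent n A B \<sigma>" for \<sigma>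
    using assms by (rule consistent_cong) (rule nth_map_upt_shift)
  have "card {\<sigma>. \<sigma> permutes {1..n} \<and> consistent n A B \<sigma>} =
      card (?list ` {\<sigma>. \<sigma> permutes {1..n} \<and> consistent n A B \<sigma>})"
    by (rule card_image[symmetric], rule inj_on_subset[OF inj_on_permutes_list]) auto
  also have "?list ` {\<sigma>. \<sigma> permutes {1..n} \<and> consistent n A B \<sigma>} =
      {xs \<in> ?list ` {\<sigma>. \<sigma> permutes {1..n}}. consistent n A B (entry xs)}"
    using same by (auto simp del: upt_Suc)
  also have "\<dots> = {xs \<in> permutations_of_set {1..n}. consistent n A B (entry xs)}"
    unfolding permutes_list_image ..
  finally show ?thesis .
qed

lemma sum_CONS_eq_consistent_sum:
  assumes \<beta>: "is_comp n \<beta>" and G: "G \<subseteq> {1..<n}" and n: "1 \<le> n"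
  shows "(\<Sum>\<alpha> | is_comp n \<alpha> \<and> comp_le \<alpha> \<beta> \<and> unimodal \<alpha> G.
      int (card (CONS n \<alpha> \<beta>)) * (-1) ^ card (G - Sset \<alpha>)) = consistent_sum n (Sset \<beta>) G {1..n}"
proof -
  let ?comps = "{\<alpha>. is_comp n \<alpha> \<and> comp_le \<alpha> \<beta> \<and> unimodal \<alpha> G}"
  let ?f = "\<lambda>A. int (card {xs \<in> permutations_of_set {1..n}. consistent n A (Sset \<beta>) (entry xs)}) *
    (-1) ^ card (G - A)"
  have "int (card (CONS n \<alpha> \<beta>)) * (-1) ^ card (G - Sset \<alpha>) = ?f (Sset \<alpha>)" if "\<alpha> \<in> ?comps" for \<alpha>
    using that CONS_eq_consistent[OF _ \<beta> _ n] card_consistent_permutes[OF Sset_subset] by simp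
  then have "(\<Sum>\<alpha>\<in>?comps. int (card (CONS n \<alpha> \<beta>)) * (-1) ^ card (G - Sset \<alpha>)) = (\<Sum>\<alpha>\<in>?comps. ?f (Sset \<alpha>))"
    by (rule sum.cong[OF refl])
  also have "\<dots> = sum ?f (Sset ` ?comps)"
    by (rule sum.reindex[symmetric, unfolded comp_def]) (auto intro: inj_onI Sset_inj)
  also have "Sset ` ?comps = {A. Sset \<beta> \<subseteq> A \<and> A \<subseteq> {1..<n} \<and> unimodal_cuts A G}"
  proof (intro set_eqI iffI)
    fix A assume "A \<in> Sset ` ?comps"
    then show "A \<in> {A. Sset \<beta> \<subseteq> A \<and> A \<subseteq> {1..<n} \<and> unimodal_cuts A G}"
      using Sset_subset unimodal_iff_unimodal_cuts[OF _ G] unfolding comp_le_def by auto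
  next
    fix A assume A: "A \<in> {A. Sset \<beta> \<subseteq> A \<and> A \<subseteq> {1..<n} \<and> unimodal_cuts A G}"
    then obtain \<alpha> where "is_comp n \<alpha>" "Sset \<alpha> = A" using Sset_surj by blast
    then show "A \<in> Sset ` ?comps"
      using A unimodal_iff_unimodal_cuts[OF _ G] unfolding comp_le_def by auto
  qed
  finally show ?thesis unfolding consistent_sum_def .
qed

theorem theorem2p4:
  fixes n :: nat and \<beta> \<gamma> :: "nat list"
  assumes "is_comp n \<beta>" and "is_comp n \<gamma>"
  shows "(\<Sum>\<alpha> \<in> {\<alpha>. is_comp n \<alpha> \<and> comp_le \<alpha> \<beta> \<and> unimodal \<alpha> (Sset \<gamma>)}.
            int (card (CONS n \<alpha> \<beta>)) * (-1) ^ card (Sset \<gamma> - Sset \<alpha>))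
         = (if comp_le \<beta> \<gamma> then int (fact n) else 0)"
proof (cases "n = 0")
  case True
  then have "\<beta> = []" "\<gamma> = []" using assms is_comp_0 by auto
  moreover have "is_comp 0 \<alpha> \<longleftrightarrow> \<alpha> = []" for \<alpha> using is_comp_0 by (auto simp: is_comp_def)
  then have "{\<alpha>. is_comp 0 \<alpha> \<and> comp_le \<alpha> [] \<and> unimodal \<alpha> {}} = {[]}"
    by (auto simp: comp_le_def unimodal_def)
  moreover have "CONS 0 [] [] = {id}" unfolding CONS_def by (auto simp: permutes_empty)
  moreover have "Sset [] = {}" unfolding Sset_def by simp
  ultimately show ?thesis using True by (simp add: comp_le_def)
next
  case False
  have "Sset \<beta> \<subseteq> {1..<n}" "Sset \<gamma> \<subseteq> {1..<n}" using Sset_subset assms by auto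
  then show ?thesis
    using sum_CONS_eq_consistent_sum[OF assms(1)] consistent_sum_eq[of "{1..n}" n] False
    unfolding comp_le_def by simp
qed

end
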